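(* Let $\sigma$ be as in the context (in particular $\sigma(1)<1$), with the exponent $\alpha$ of condition $(\Sigma 3)$ satisfying $\alpha>1$, and assume that $M_1(\phi_\sigma')<+\infty$. Let $f\in C(I)$ be such that $$\|K_n(f,\cdot)-f(\cdot)\|_\infty=\mathcal O(n^{-\nu}),\qquad n\to+\infty,$$ for some $0<\nu<1$. Then $f\in Lip(\nu)$.
   Context: $\sigma:\mathbb R\to\mathbb R$ is a non-decreasing sigmoidal function ($\lim_{x\to-\infty}\sigma(x)=0$, $\lim_{x\to+\infty}\sigma(x)=1$) satisfying: $(\Sigma1)$ $\sigma(x)-1/2$ is an odd function; $(\Sigma2)$ $\sigma\in C^2(\mathbb R)$ and $\sigma$ is concave on $[0,+\infty)$; $(\Sigma3)$ $\sigma(x)=\mathcal O(|x|^{-1-\alpha})$ as $x\to-\infty$, for some $\alpha>0$; moreover $\sigma(1)<1$ (standing assumption under which the Kantorovich operators below are well defined). Set $\phi_\sigma(x):=\frac12[\sigma(x+1)-\sigma(x-1)]$ and $\Psi_\sigma(\mathbf x):=\prod_{i=1}^d\phi_\sigma(x_i)$ for $\mathbf x\in\mathbb R^d$. For $g:\mathbb R\to\mathbb R$ and $\beta\ge0$, $M_\beta(g):=\sup_{x\in\mathbb R}\sum_{k\in\mathbb Z}|g(x-k)|\,|k-x|^\beta$. Let $I=\prod_{i=1}^d[a_i,b_i]$ with $a_i<b_i$; $C(I)$ carries the sup-norm. Let $\mathcal K_n:=\{\mathbf k\in\mathbb Z^d:\lceil na_i\rceil\le k_i\le\lfloor nb_i\rfloor-1,\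 i=1,\dots,d\}$. For locally integrable $f:I\to\mathbb R$ and $n\in\mathbb N^+$, the Kantorovich neural network operators are $$K_n(f,\mathbf x):=\frac{\sum_{\mathbf k\in\mathcal K_n}\Big[n^d\int_{R_{\mathbf k,n}}f(\mathbf u)\,d\mathbf u\Big]\Psi_\sigma(n\mathbf x-\mathbf k)}{\sum_{\mathbf k\in\mathcal K_n}\Psi_\sigma(n\mathbf x-\mathbf k)},\qquad \mathbf x\in I,$$ where $R_{\mathbf k,n}:=\prod_{i=1}^d[k_i/n,(k_i+1)/n]$. The modulus of continuity is $\omega(f,\delta):=\sup\{|f(\mathbf x)-f(\mathbf y)|:\mathbf x,\mathbf y\in I,\ \|\mathbf x-\mathbf y\|_2\le\delta\}$, and for $0<\nu\le1$, $Lip(\nu):=\{f\in C(I):\omega(f,\delta)=\mathcal O(\delta^\nu)\text{ as }\delta\to0^+\}$. *)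

theory Defs
  imports "HOL-Analysis.Analysis" "HOL-Library.Landau_Symbols"
begin

definition phi_sigma :: "(real \<Rightarrow> real) \<Rightarrow> real \<Rightarrow> real" where
  "phi_sigma \<sigma> x = (\<sigma> (x + 1) - \<sigma> (x - 1)) / 2"

definition Psi_sigma :: "(real \<Rightarrow> real) \<Rightarrow> real ^ 'n \<Rightarrow> real" where
  "Psi_sigma \<sigma> x = (\<Prod>i\<in>UNIV. phi_sigma \<sigma> (x $ i))"

definition M_beta :: "real \<Rightarrow> (real \<Rightarrow> real) \<Rightarrow> ennreal" where
  "M_beta \<beta> g = (SUP x. (\<Sum>\<^sub>\<infinity> k\<in>(UNIV::int set).
       ennreal (\<bar>g (x - real_of_int k)\<bar> *
         (if \<beta> = 0 then 1 else \<bar>real_of_int k - x\<bar> powr \<beta>))))"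

definition Kset :: "real ^ 'n \<Rightarrow> real ^ 'n \<Rightarrow> nat \<Rightarrow> (int ^ 'n) set" where
  "Kset a b n = {k. \<forall>i. \<lceil>real n * a $ i\<rceil> \<le> k $ i \<and> k $ i \<le> \<lfloor>real n * b $ i\<rfloor> - 1}"

definition Rbox :: "int ^ 'n \<Rightarrow> nat \<Rightarrow> (real ^ 'n) set" where
  "Rbox k n = cbox (\<chi> i. real_of_int (k $ i) / real n) (\<chi> i. (real_of_int (k $ i) + 1) / real n)"

definition kvec :: "int ^ 'n \<Rightarrow> real ^ 'n" where
  "kvec k = (\<chi> i. real_of_int (k $ i))"

definition KNN :: "(real \<Rightarrow> real) \<Rightarrow> real ^ 'n \<Rightarrow> real ^ 'n \<Rightarrow> nat
    \<Rightarrow> (real ^ 'n \<Rightarrow> real) \<Rightarrow> real ^ 'n \<Rightarrow> real" where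
  "KNN \<sigma> a b n f x =
     (\<Sum>k\<in>Kset a b n. (real n ^ CARD('n) * integral (Rbox k n) f)
          * Psi_sigma \<sigma> (real n *\<^sub>R x - kvec k))
     / (\<Sum>k\<in>Kset a b n. Psi_sigma \<sigma> (real n *\<^sub>R x - kvec k))"

definition modcont :: "(real ^ 'n) set \<Rightarrow> (real ^ 'n \<Rightarrow> real) \<Rightarrow> real \<Rightarrow> real" where
  "modcont I f \<delta> = Sup {\<bar>f x - f y\<bar> | x y. x \<in> I \<and> y \<in> I \<and> norm (x - y) \<le> \<delta>}"

definition LipClass :: "(real ^ 'n) set \<Rightarrow> real \<Rightarrow> (real ^ 'n \<Rightarrow> real) set" where
  "LipClass I \<nu> = {f. continuous_on I f \<and>
       (\<lambda>\<delta>. modcont I f \<delta>) \<in> O[at_right 0](\<lambda>\<delta>. \<delta> powr \<nu>)}"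

end

(*
  Along the segment from y to x, the mean value theorem applied to the quotient defining K_n,
  recentred at f(z), gives the Bernstein-type inequality
    |K_n f(x) - K_n f(y)| <= A n |x - y| (omega(f, 1/n) + ||K_n f - f||):
  the lattice sums of phi_sigma and phi_sigma' with weight 1 + |s| are uniformly bounded
  (by the decay of sigma with alpha > 1 and by M_1(phi_sigma') < infinity), and the
  denominator is bounded below because phi_sigma > 0 on [-2, 2].  With the assumed rate this
  yields omega(delta) <= B (n^(-nu) + n delta omega(1/n)) whenever n delta <= 1.  Choosing
  n ~ q / delta for a small q and inducting over dyadic scales (as in the Berens-Lorentz
  lemma) gives omega(delta) = O(delta^nu); this is where nu < 1 is needed.
*)
theory Submission
  imports Defs
begin

section \<open>Lattice sums\<close>

text \<open>Finite partial sums sidestep summability: for nonnegative \<open>g\<close> this says that the lattice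
  sums \<open>\<Sum>k. g (t - k)\<close> are bounded uniformly in \<open>t\<close>.\<close>
definition lattice_sum_bounded :: "(real \<Rightarrow> real) \<Rightarrow> bool" where
  "lattice_sum_bounded g \<longleftrightarrow>
     (\<exists>C. \<forall>t (K::int set). finite K \<longrightarrow> (\<Sum>k\<in>K. g (t - real_of_int k)) \<le> C)"

lemma lattice_sum_bounded_mono:
  assumes "lattice_sum_bounded h" "\<And>s. g s \<le> h s"
  shows "lattice_sum_bounded g"
proof -
  obtain C where C: "\<And>t K. finite K \<Longrightarrow> (\<Sum>k\<in>K. h (t - real_of_int k)) \<le> C"
    using assms(1) unfolding lattice_sum_bounded_def by blast
  have "(\<Sum>k\<in>K. g (t - real_of_int k)) \<le> C" if "finite K" for t K
  proof -
    have "(\<Sum>k\<in>K. g (t - real_of_int k)) \<le> (\<Sum>k\<in>K. h (t - real_of_int k))"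
      by (intro sum_mono assms(2))
    also have "\<dots> \<le> C"
      by (rule C[OF that])
    finally show ?thesis .
  qed
  then show ?thesis
    unfolding lattice_sum_bounded_def by blast
qed

lemma lattice_sum_bounded_add:
  assumes "lattice_sum_bounded g" "lattice_sum_bounded h"
  shows "lattice_sum_bounded (\<lambda>s. g s + h s)"
proof -
  obtain C D where "\<And>t K. finite K \<Longrightarrow> (\<Sum>k\<in>K. g (t - real_of_int k)) \<le> C"
    and "\<And>t K. finite K \<Longrightarrow> (\<Sum>k\<in>K. h (t - real_of_int k)) \<le> D"
    using assms unfolding lattice_sum_bounded_def by blast
  then show ?thesis
    unfolding lattice_sum_bounded_def by (intro exI[of _ "C + D"]) (simp add: sum.distrib add_mono)
qed

lemma lattice_sum_bounded_cmult:
  assumes "lattice_sum_bounded g" "c \<ge> 0"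
  shows "lattice_sum_bounded (\<lambda>s. c * g s)"
proof -
  obtain C where "\<And>t K. finite K \<Longrightarrow> (\<Sum>k\<in>K. g (t - real_of_int k)) \<le> C"
    using assms(1) unfolding lattice_sum_bounded_def by blast
  then show ?thesis
    unfolding lattice_sum_bounded_def using assms(2)
    by (intro exI[of _ "c * C"]) (simp add: sum_distrib_left[symmetric] mult_left_mono)
qed

lemma sum_powr_dist_le_suminf:
  fixes \<alpha> t :: real and K :: "int set"
  assumes "\<alpha> > 1" "finite K" "\<And>k. k \<in> K \<Longrightarrow> real_of_int k \<le> t"
  shows "(\<Sum>k\<in>K. (\<bar>t - real_of_int k\<bar> + 1) powr -\<alpha>) \<le> (\<Sum>m. (real m + 1) powr -\<alpha>)"
proof -
  define s where "s m = (real m + 1) powr -\<alpha>" for m :: nat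
  define e where "e k = nat \<lfloor>t - real_of_int k\<rfloor>" for k
  have "summable (\<lambda>m::nat. real m powr -\<alpha>)"
    using assms(1) by (subst summable_real_powr_iff) auto
  then have "summable s"
    unfolding s_def using summable_Suc_iff[of "\<lambda>m::nat. real m powr -\<alpha>"] by (simp add: add.commute)
  have floor_nonneg: "0 \<le> \<lfloor>t - real_of_int k\<rfloor>" if "k \<in> K" for k
    using assms(3)[OF that] by (simp add: le_floor_iff)
  have "inj_on e K"
  proof (rule inj_onI)
    fix k l assume "k \<in> K" "l \<in> K" "e k = e l"
    then have "\<lfloor>t\<rfloor> - k = \<lfloor>t\<rfloor> - l"
      using floor_nonneg unfolding e_def by (metis floor_diff_of_int eq_nat_nat_iff)
    then show "k = l" by simp
  qed
  have "(\<bar>t - real_of_int k\<bar> + 1) powr -\<alpha> \<le> s (e k)" if "k \<in> K" for k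
  proof -
    have "real (e k) \<le> \<bar>t - real_of_int k\<bar>"
      using floor_nonneg[OF that] unfolding e_def by linarith
    then show ?thesis
      unfolding s_def using assms(1) by (intro powr_mono2') auto
  qed
  then have "(\<Sum>k\<in>K. (\<bar>t - real_of_int k\<bar> + 1) powr -\<alpha>) \<le> (\<Sum>k\<in>K. s (e k))"
    by (rule sum_mono)
  also have "\<dots> = sum s (e ` K)"
    using \<open>inj_on e K\<close> by (simp add: sum.reindex)
  also have "\<dots> \<le> suminf s"
    using \<open>summable s\<close> assms(2) by (intro sum_le_suminf) (auto simp: s_def)
  finally show ?thesis unfolding s_def .
qed

lemma lattice_sum_bounded_powr:
  assumes "\<alpha> > 1"
  shows "lattice_sum_bounded (\<lambda>s. (\<bar>s\<bar> + 1) powr -\<alpha>)"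
proof -
  define S where "S = (\<Sum>m. (real m + 1) powr -\<alpha>)"
  have "(\<Sum>k\<in>K. (\<bar>t - real_of_int k\<bar> + 1) powr -\<alpha>) \<le> 2 * S" if "finite K" for t K
  proof -
    let ?g = "\<lambda>t k. (\<bar>t - real_of_int k\<bar> + 1) powr -\<alpha>"
    define K1 where "K1 = {k\<in>K. real_of_int k \<le> t}"
    define K2 where "K2 = {k\<in>K. \<not> real_of_int k \<le> t}"
    have "sum (?g t) K2 = sum (?g (-t)) (uminus ` K2)"
      by (simp add: sum.reindex abs_minus_commute)
    also have "\<dots> \<le> S"
      unfolding S_def using assms that by (intro sum_powr_dist_le_suminf) (auto simp: K2_def)
    finally have "sum (?g t) K2 \<le> S" .
    moreover have "sum (?g t) K1 \<le> S"
      unfolding S_def using assms that by (intro sum_powr_dist_le_suminf) (auto simp: K1_def)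
    moreover have "K = K1 \<union> K2" "K1 \<inter> K2 = {}" "finite K1" "finite K2"
      unfolding K1_def K2_def using that by auto
    then have "sum (?g t) K = sum (?g t) K1 + sum (?g t) K2"
      by (metis sum.union_disjoint)
    ultimately show ?thesis by linarith
  qed
  then show ?thesis
    unfolding lattice_sum_bounded_def by blast
qed

lemma lattice_sum_bounded_powr_tail:
  assumes "\<alpha> > 1" "\<And>s. \<bar>s\<bar> \<le> L \<Longrightarrow> g s \<le> M"
    "\<And>s. \<bar>s\<bar> > L \<Longrightarrow> g s \<le> c * (\<bar>s\<bar> + 1) powr -\<alpha>"
  shows "lattice_sum_bounded g"
proof (rule lattice_sum_bounded_mono)
  define C where "C = max c 0 + max M 0 * (\<bar>L\<bar> + 1) powr \<alpha>"
  show "lattice_sum_bounded (\<lambda>s. C * (\<bar>s\<bar> + 1) powr -\<alpha>)"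
    unfolding C_def using lattice_sum_bounded_powr[OF assms(1)]
    by (intro lattice_sum_bounded_cmult) auto
  fix s
  have p: "0 \<le> max c 0 * (\<bar>s\<bar> + 1) powr -\<alpha>" "0 \<le> max M 0 * (\<bar>L\<bar> + 1) powr \<alpha> * (\<bar>s\<bar> + 1) powr -\<alpha>"
    by simp_all
  show "g s \<le> C * (\<bar>s\<bar> + 1) powr -\<alpha>"
  proof (cases "\<bar>s\<bar> \<le> L")
    case True
    have "1 \<le> (\<bar>L\<bar> + 1) powr \<alpha> * (\<bar>s\<bar> + 1) powr -\<alpha>"
      using True assms(1) by (simp add: powr_minus divide_simps powr_mono2)
    then have "max M 0 \<le> max M 0 * ((\<bar>L\<bar> + 1) powr \<alpha> * (\<bar>s\<bar> + 1) powr -\<alpha>)"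
      by (simp add: mult_le_cancel_left1)
    then show ?thesis
      using assms(2)[OF True] p(1) max.cobounded1[of M 0] unfolding C_def distrib_right mult.assoc
      by linarith
  next
    case False
    then have "g s \<le> c * (\<bar>s\<bar> + 1) powr -\<alpha>"
      by (intro assms(3)) simp
    also have "\<dots> \<le> max c 0 * (\<bar>s\<bar> + 1) powr -\<alpha>"
      by (intro mult_right_mono) auto
    finally show ?thesis
      using p(2) unfolding C_def distrib_right by linarith
  qed
qed

lemma lattice_sum_bounded_M_beta_1:
  assumes "M_beta 1 g < top"
  shows "lattice_sum_bounded (\<lambda>s. \<bar>g s\<bar> * \<bar>s\<bar>)"
  unfolding lattice_sum_bounded_def
proof (intro exI allI impI)
  fix t and K :: "int set" assume K: "finite K"
  define h where "h k = \<bar>g (t - real_of_int k)\<bar> * \<bar>t - real_of_int k\<bar>" for k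
  have "ennreal (sum h K) = (\<Sum>k\<in>K. ennreal (h k))"
    unfolding h_def by (rule sum_ennreal[symmetric]) auto
  also have "\<dots> \<le> (\<Sum>\<^sub>\<infinity> k\<in>(UNIV::int set). ennreal (h k))"
    by (subst nonneg_infsum_complete) (auto intro!: SUP_upper K)
  also have "\<dots> \<le> M_beta 1 g"
    unfolding M_beta_def h_def by (rule SUP_upper2[of t]) (auto simp: abs_minus_commute)
  finally have "enn2real (ennreal (sum h K)) \<le> enn2real (M_beta 1 g)"
    using assms by (intro enn2real_mono) auto
  moreover have "sum h K \<ge> 0"
    unfolding h_def by (intro sum_nonneg) auto
  ultimately show "(\<Sum>k\<in>K. \<bar>g (t - real_of_int k)\<bar> * \<bar>t - real_of_int k\<bar>) \<le> enn2real (M_beta 1 g)"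
    unfolding h_def by simp
qed

section \<open>Index sets and cells\<close>

lemma Kset_eq_image_PiE:
  fixes a b :: "real^'n::finite"
  shows "Kset a b n = vec_lambda ` PiE UNIV (\<lambda>i. {\<lceil>real n * a$i\<rceil>..\<lfloor>real n * b$i\<rfloor> - 1})"
proof (intro set_eqI iffI)
  fix k :: "int^'n" assume "k \<in> Kset a b n"
  then show "k \<in> vec_lambda ` PiE UNIV (\<lambda>i. {\<lceil>real n * a$i\<rceil>..\<lfloor>real n * b$i\<rfloor> - 1})"
    unfolding Kset_def by (intro image_eqI[of _ _ "vec_nth k"]) auto
qed (auto simp: Kset_def)

lemma finite_Kset:
  fixes a b :: "real^'n::finite"
  shows "finite (Kset a b n)"
  unfolding Kset_eq_image_PiE by (simp add: finite_PiE)

lemma sum_Kset_prod: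
  fixes a b :: "real^'n::finite" and g :: "'n::finite \<Rightarrow> int \<Rightarrow> real"
  shows "(\<Sum>k\<in>Kset a b n. \<Prod>i\<in>UNIV. g i (k$i))
       = (\<Prod>i\<in>UNIV. \<Sum>m\<in>{\<lceil>real n * a$i\<rceil>..\<lfloor>real n * b$i\<rfloor> - 1}. g i m)"
proof -
  have "inj_on vec_lambda (PiE UNIV (\<lambda>i. {\<lceil>real n * a$i\<rceil>..\<lfloor>real n * b$i\<rfloor> - 1}))"
    by (intro inj_onI) (simp add: vec_lambda_inject)
  then show ?thesis
    unfolding Kset_eq_image_PiE by (simp add: sum.reindex prod_sum_PiE)
qed

lemma sum_Kset_prod_le:
  fixes a b :: "real^'n::finite" and G :: "'n::finite \<Rightarrow> real \<Rightarrow> real" and t :: "'n \<Rightarrow> real"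
  assumes "\<And>i s. G i s \<ge> 0" "\<And>i K. finite K \<Longrightarrow> (\<Sum>k\<in>K. G i (t i - real_of_int k)) \<le> B"
  shows "(\<Sum>k\<in>Kset a b n. \<Prod>i\<in>UNIV. G i (t i - real_of_int (k$i))) \<le> B ^ CARD('n)"
proof -
  have "(\<Sum>k\<in>Kset a b n. \<Prod>i\<in>UNIV. G i (t i - real_of_int (k$i)))
      = (\<Prod>i\<in>UNIV. \<Sum>m\<in>{\<lceil>real n * a$i\<rceil>..\<lfloor>real n * b$i\<rfloor> - 1}. G i (t i - real_of_int m))"
    by (rule sum_Kset_prod)
  also have "\<dots> \<le> (\<Prod>i\<in>(UNIV::'n set). B)"
    using assms by (intro prod_mono conjI sum_nonneg) auto
  finally show ?thesis by simp
qed

lemma sum_Kset_prod_one_factor_le: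
  fixes g g' :: "real \<Rightarrow> real"
  assumes "lattice_sum_bounded g" "lattice_sum_bounded g'" "\<And>s. 0 \<le> g s" "\<And>s. 0 \<le> g' s"
  shows "\<exists>C\<ge>0. \<forall>n (a::real^'n::finite) b t i.
    (\<Sum>k\<in>Kset a b n. \<Prod>j\<in>UNIV. (if j = i then g' else g) (t j - real_of_int (k$j))) \<le> C"
proof -
  obtain C C' where
    C: "\<And>t K. finite K \<Longrightarrow> (\<Sum>k\<in>K. g (t - real_of_int k)) \<le> C" and
    C': "\<And>t K. finite K \<Longrightarrow> (\<Sum>k\<in>K. g' (t - real_of_int k)) \<le> C'"
    using assms(1,2) unfolding lattice_sum_bounded_def by blast
  have "(\<Sum>k\<in>Kset a b n. \<Prod>j\<in>UNIV. (if j = i then g' else g) (t j - real_of_int (k$j)))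
      \<le> max 0 (max C C') ^ CARD('n)" for n and a b :: "real^'n" and t i
  proof (rule sum_Kset_prod_le)
    show "(if j = i then g' else g) s \<ge> 0" for j s
      using assms(3,4) by simp
    show "(\<Sum>k\<in>K. (if j = i then g' else g) (t j - real_of_int k)) \<le> max 0 (max C C')"
      if "finite K" for j K
      using C[OF that, of "t j"] C'[OF that, of "t j"] by auto
  qed
  then show ?thesis
    by (intro exI[of _ "max 0 (max C C') ^ CARD('n)"]) auto
qed

lemma one_plus_abs_le_prod:
  fixes g :: "'n::finite \<Rightarrow> real"
  shows "1 + \<bar>g i\<bar> \<le> (\<Prod>j\<in>UNIV. 1 + \<bar>g j\<bar>)"
proof -
  have "1 \<le> (\<Prod>j\<in>UNIV - {i}. 1 + \<bar>g j\<bar>)"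
    by (intro prod_ge_1) auto
  then show ?thesis
    by (simp add: prod.remove[of UNIV i] mult_le_cancel_left1)
qed

lemma Rbox_subset_cbox:
  assumes "k \<in> Kset a b n" "0 < n"
  shows "Rbox k n \<subseteq> cbox a b"
proof
  fix u assume "u \<in> Rbox k n"
  then have "real_of_int (k$j) / real n \<le> u$j \<and> u$j \<le> (real_of_int (k$j) + 1) / real n" for j
    unfolding Rbox_def by (auto simp: mem_box_cart)
  moreover have "a$j \<le> real_of_int (k$j) / real n" "(real_of_int (k$j) + 1) / real n \<le> b$j" for j
  proof -
    have "\<lceil>real n * a$j\<rceil> \<le> k$j \<and> k$j \<le> \<lfloor>real n * b$j\<rfloor> - 1"
      using assms(1) unfolding Kset_def by blast
    then have "\<lceil>real n * a$j\<rceil> \<le> k$j" "k$j + 1 \<le> \<lfloor>real n * b$j\<rfloor>"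
      by linarith+
    then have "real n * a$j \<le> real_of_int (k$j)" "real_of_int (k$j) + 1 \<le> real n * b$j"
      by (simp_all add: ceiling_le_iff le_floor_iff)
    then show "a$j \<le> real_of_int (k$j) / real n" "(real_of_int (k$j) + 1) / real n \<le> b$j"
      using assms(2) by (simp_all add: field_simps)
  qed
  ultimately show "u \<in> cbox a b"
    unfolding mem_box_cart by (meson order_trans)
qed

lemma content_Rbox:
  fixes k :: "int^'n::finite"
  assumes "0 < n"
  shows "Henstock_Kurzweil_Integration.content (Rbox k n) = (1 / real n) ^ CARD('n)"
proof -
  have "Rbox k n \<noteq> {}"
    unfolding Rbox_def interval_eq_empty_cart using assms by (auto simp: not_less divide_right_mono)
  then have "Henstock_Kurzweil_Integration.content (Rbox k n)
      = (\<Prod>j\<in>UNIV. (real_of_int (k$j) + 1) / real n - real_of_int (k$j) / real n)"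
    unfolding Rbox_def by (subst content_cbox_cart) auto
  also have "\<dots> = (\<Prod>j\<in>(UNIV::'n set). 1 / real n)"
    by (simp add: diff_divide_distrib[symmetric])
  finally show ?thesis
    by simp
qed

lemma mem_Rbox_scaled:
  assumes "u \<in> Rbox k n" "0 < n"
  shows "real_of_int (k$j) \<le> real n * u$j" "real n * u$j \<le> real_of_int (k$j) + 1"
  using assms unfolding Rbox_def by (auto simp: mem_box_cart field_simps)

section \<open>Sigmoidal functions\<close>

lemma powr_shifted_le:
  fixes u \<alpha> :: real
  assumes "u \<ge> 2" "\<alpha> \<ge> 0"
  shows "(u - 1) powr (-1 - \<alpha>) * (u + 1) \<le> 3 powr (1 + \<alpha>) * (u + 1) powr -\<alpha>"
proof -
  have "(u - 1) powr (-1 - \<alpha>) \<le> ((u + 1) / 3) powr (-1 - \<alpha>)"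
    using assms by (intro powr_mono2') auto
  also have "\<dots> = 3 powr (1 + \<alpha>) * (u + 1) powr (-1 - \<alpha>)"
  proof -
    have "3 powr (1 + \<alpha>) * 3 powr (-1 - \<alpha>) = 1"
      by (simp add: powr_add[symmetric])
    then show ?thesis
      using assms by (simp add: powr_divide divide_simps)
  qed
  finally have "(u - 1) powr (-1 - \<alpha>) * (u + 1) \<le> 3 powr (1 + \<alpha>) * ((u + 1) powr (-1 - \<alpha>) * (u + 1))"
    using assms by (simp add: mult_right_mono mult.assoc)
  also have "(u + 1) powr (-1 - \<alpha>) * (u + 1) = (u + 1) powr -\<alpha>"
    using assms by (simp add: powr_diff powr_minus divide_simps)
  finally show ?thesis .
qed

locale sigmoidal =
  fixes \<sigma> :: "real \<Rightarrow> real" and \<alpha> :: real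
  assumes mono_sigma: "mono \<sigma>"
    and sigma_at_bot: "(\<sigma> \<longlongrightarrow> 0) at_bot"
    and sigma_at_top: "(\<sigma> \<longlongrightarrow> 1) at_top"
    and sigma_odd: "\<And>x. \<sigma> (- x) - 1/2 = - (\<sigma> x - 1/2)"
    and sigma_differentiable: "\<And>x. \<sigma> differentiable (at x)"
    and sigma_concave: "concave_on {0..} \<sigma>"
    and alpha_gt_1: "\<alpha> > 1"
    and sigma_decay: "\<sigma> \<in> O[at_bot](\<lambda>x. \<bar>x\<bar> powr (-1 - \<alpha>))"
    and sigma_1_lt_1: "\<sigma> 1 < 1"
begin

abbreviation "\<phi> \<equiv> phi_sigma \<sigma>"

lemma sigma_le_1: "\<sigma> x \<le> 1"
proof (rule tendsto_lowerbound[OF sigma_at_top])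
  show "\<forall>\<^sub>F y in at_top. \<sigma> x \<le> \<sigma> y"
    using eventually_ge_at_top[of x] by eventually_elim (use mono_sigma in \<open>auto simp: mono_def\<close>)
qed simp

lemma sigma_nonneg: "0 \<le> \<sigma> x"
proof (rule tendsto_upperbound[OF sigma_at_bot])
  show "\<forall>\<^sub>F y in at_bot. \<sigma> y \<le> \<sigma> x"
    using eventually_le_at_bot[of x] by eventually_elim (use mono_sigma in \<open>auto simp: mono_def\<close>)
qed simp

lemma sigma_minus: "\<sigma> (- x) = 1 - \<sigma> x"
  using sigma_odd[of x] by simp

lemma phi_nonneg: "0 \<le> \<phi> s"
  using mono_sigma unfolding phi_sigma_def mono_def by auto

lemma phi_le_half: "\<phi> s \<le> 1/2"
  using sigma_le_1[of "s + 1"] sigma_nonneg[of "s - 1"] unfolding phi_sigma_def by auto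

lemma phi_minus: "\<phi> (- s) = \<phi> s"
proof -
  have "\<sigma> (- s + 1) = 1 - \<sigma> (s - 1)" "\<sigma> (- s - 1) = 1 - \<sigma> (s + 1)"
    using sigma_minus[of "s - 1"] sigma_minus[of "s + 1"] by simp_all
  then show ?thesis
    unfolding phi_sigma_def by simp
qed

lemma phi_abs: "\<phi> \<bar>s\<bar> = \<phi> s"
  by (cases "s \<ge> 0") (auto simp: phi_minus)

lemma phi_le_sigma: "\<phi> s \<le> \<sigma> (1 - s) / 2"
proof -
  have "\<sigma> (1 - s) = 1 - \<sigma> (s - 1)" "\<sigma> (-1 - s) = 1 - \<sigma> (s + 1)"
    using sigma_minus[of "s - 1"] sigma_minus[of "s + 1"] by (simp_all add: algebra_simps)
  then have "\<phi> s = (\<sigma> (1 - s) - \<sigma> (-1 - s)) / 2"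
    unfolding phi_sigma_def by simp
  then show ?thesis
    using sigma_nonneg[of "-1 - s"] by simp
qed

lemma isCont_sigma: "isCont \<sigma> x"
  using sigma_differentiable differentiable_imp_continuous_within by blast

lemma isCont_phi: "isCont \<phi> x"
  unfolding phi_sigma_def[abs_def]
  by (intro continuous_intros isCont_o2[OF _ isCont_sigma]) auto

lemma phi_differentiable: "\<phi> differentiable (at x)"
  unfolding phi_sigma_def[abs_def]
  by (intro derivative_intros differentiable_compose[OF sigma_differentiable]) auto

text \<open>A concave function that is constant on some interval \<open>[u, v]\<close> with \<open>u \<ge> 0\<close> cannot increase
  beyond \<open>v\<close>; since \<open>\<sigma> 1 < 1\<close> but \<open>\<sigma>\<close> tends to \<open>1\<close>, this rules out flat pieces starting in \<open>[0, 1]\<close>.\<close>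
lemma sigma_strict_mono:
  assumes "0 \<le> u" "u \<le> 1" "u < v"
  shows "\<sigma> u < \<sigma> v"
proof (rule ccontr)
  assume "\<not> \<sigma> u < \<sigma> v"
  moreover have "\<sigma> u \<le> \<sigma> v"
    using mono_sigma assms unfolding mono_def by simp
  ultimately have flat: "\<sigma> v = \<sigma> u"
    by simp
  have beyond: "\<sigma> w \<le> \<sigma> u" if "w > v" for w
  proof -
    have "{u..w} \<subseteq> {0..}"
      using assms by auto
    then have "concave_on {u..w} \<sigma>"
      using convex_on_subset[OF sigma_concave[unfolded concave_on_def]] unfolding concave_on_def by simp
    moreover have "v \<in> {u..w}"
      using assms that by simp
    ultimately have "(\<sigma> w - \<sigma> u) / (w - u) * (v - u) + \<sigma> u \<le> \<sigma> v"
      by (rule concave_onD_Icc')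
    then have "(\<sigma> w - \<sigma> u) / (w - u) * (v - u) \<le> 0"
      using flat by simp
    then have "(\<sigma> w - \<sigma> u) / (w - u) \<le> 0"
      using assms by (smt (verit) mult_pos_pos)
    then show ?thesis
      using assms that by (smt (verit) divide_pos_pos)
  qed
  have "(\<sigma> 1 + 1) / 2 < 1"
    using sigma_1_lt_1 by simp
  from order_tendstoD(1)[OF sigma_at_top this]
  obtain N where N: "\<And>w. w \<ge> N \<Longrightarrow> (\<sigma> 1 + 1) / 2 < \<sigma> w"
    unfolding eventually_at_top_linorder by blast
  have "\<sigma> (max N (v + 1)) \<le> \<sigma> u"
    by (rule beyond) simp
  moreover have "\<sigma> u \<le> \<sigma> 1"
    using mono_sigma assms unfolding mono_def by auto
  ultimately show False
    using N[of "max N (v + 1)"] sigma_1_lt_1 by simp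
qed

lemma phi_pos:
  assumes "\<bar>s\<bar> \<le> 2"
  shows "\<phi> s > 0"
proof -
  have "\<sigma> (\<bar>s\<bar> - 1) < \<sigma> (\<bar>s\<bar> + 1)"
  proof (cases "\<bar>s\<bar> \<ge> 1")
    case True
    then show ?thesis
      using assms by (intro sigma_strict_mono) auto
  next
    case False
    have "\<sigma> (\<bar>s\<bar> - 1) \<le> \<sigma> 0"
      using mono_sigma False unfolding mono_def by auto
    also have "\<sigma> 0 < \<sigma> (\<bar>s\<bar> + 1)"
      by (intro sigma_strict_mono) auto
    finally show ?thesis .
  qed
  then have "\<phi> \<bar>s\<bar> > 0"
    unfolding phi_sigma_def by simp
  then show ?thesis
    by (simp add: phi_abs)
qed

lemma phi_lower_bound: "\<exists>c>0. \<forall>s. \<bar>s\<bar> \<le> 2 \<longrightarrow> c \<le> \<phi> s"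
proof -
  have "continuous_on {-2..2} \<phi>"
    using isCont_phi by (simp add: continuous_at_imp_continuous_on)
  then obtain s0 where "s0 \<in> {-2..2}" "\<And>s. s \<in> {-2..2} \<Longrightarrow> \<phi> s0 \<le> \<phi> s"
    using continuous_attains_inf[of "{-2..2::real}" \<phi>] by auto
  moreover have "\<phi> s0 > 0"
    using \<open>s0 \<in> {-2..2}\<close> by (intro phi_pos) auto
  ultimately show ?thesis
    by (intro exI[of _ "\<phi> s0"]) (auto simp: abs_le_iff)
qed

lemma lattice_sum_bounded_phi_weighted: "lattice_sum_bounded (\<lambda>s. \<phi> s * (1 + \<bar>s\<bar>))"
proof -
  obtain c where "c > 0" and "\<forall>\<^sub>F x in at_bot. norm (\<sigma> x) \<le> c * norm (\<bar>x\<bar> powr (-1 - \<alpha>))"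
    using sigma_decay by (elim landau_o.bigE)
  then obtain N where c: "\<And>x. x \<le> N \<Longrightarrow> \<bar>\<sigma> x\<bar> \<le> c * \<bar>x\<bar> powr (-1 - \<alpha>)"
    unfolding eventually_at_bot_linorder by auto
  define L where "L = max 2 (1 - N)"
  show ?thesis
  proof (rule lattice_sum_bounded_powr_tail[OF alpha_gt_1])
    fix s :: real assume "\<bar>s\<bar> \<le> L"
    then show "\<phi> s * (1 + \<bar>s\<bar>) \<le> 1/2 * (1 + L)"
      using phi_le_half[of s] phi_nonneg[of s] by (intro mult_mono) auto
  next
    fix s :: real assume s: "L < \<bar>s\<bar>"
    then have "\<bar>s\<bar> \<ge> 2" "1 - \<bar>s\<bar> \<le> N"
      unfolding L_def by auto
    then have "\<sigma> (1 - \<bar>s\<bar>) \<le> c * (\<bar>s\<bar> - 1) powr (-1 - \<alpha>)"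
      using c[of "1 - \<bar>s\<bar>"] by (simp add: abs_minus_commute)
    then have "\<phi> s \<le> c / 2 * (\<bar>s\<bar> - 1) powr (-1 - \<alpha>)"
      using phi_le_sigma[of "\<bar>s\<bar>"] unfolding phi_abs by simp
    then have "\<phi> s * (1 + \<bar>s\<bar>) \<le> c / 2 * (\<bar>s\<bar> - 1) powr (-1 - \<alpha>) * (1 + \<bar>s\<bar>)"
      by (rule mult_right_mono) simp
    also have "\<dots> = c / 2 * ((\<bar>s\<bar> - 1) powr (-1 - \<alpha>) * (\<bar>s\<bar> + 1))"
      by (simp add: ac_simps)
    also have "\<dots> \<le> c / 2 * (3 powr (1 + \<alpha>) * (\<bar>s\<bar> + 1) powr -\<alpha>)"
      using \<open>c > 0\<close> powr_shifted_le[OF \<open>\<bar>s\<bar> \<ge> 2\<close>, of \<alpha>] alpha_gt_1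
      by (intro mult_left_mono) auto
    finally show "\<phi> s * (1 + \<bar>s\<bar>) \<le> c / 2 * 3 powr (1 + \<alpha>) * (\<bar>s\<bar> + 1) powr -\<alpha>"
      by (simp add: mult.assoc)
  qed
qed

lemma Psi_sigma_nonneg: "0 \<le> Psi_sigma \<sigma> v"
  unfolding Psi_sigma_def by (intro prod_nonneg) (auto simp: phi_nonneg)

end

definition Psi_dir_deriv :: "(real \<Rightarrow> real) \<Rightarrow> real^'n \<Rightarrow> real^'n \<Rightarrow> real" where
  "Psi_dir_deriv \<sigma> v h =
     (\<Sum>i\<in>UNIV. h$i * deriv (phi_sigma \<sigma>) (v$i) * (\<Prod>j\<in>UNIV - {i}. phi_sigma \<sigma> (v$j)))"

lemma Psi_sigma_scaleR_minus_kvec: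
  "Psi_sigma \<sigma> (c *\<^sub>R x - kvec k) = (\<Prod>i\<in>UNIV. phi_sigma \<sigma> (c * x$i - real_of_int (k$i)))"
  unfolding Psi_sigma_def kvec_def by simp

context sigmoidal
begin

lemma Psi_sigma_line_has_derivative:
  fixes v h :: "real^'n::finite"
  shows "((\<lambda>s. Psi_sigma \<sigma> (v + s *\<^sub>R h)) has_real_derivative Psi_dir_deriv \<sigma> (v + s *\<^sub>R h) h) (at s)"
proof -
  have dphi: "(\<phi> has_real_derivative deriv \<phi> x) (at x)" for x
    using phi_differentiable DERIV_deriv_iff_real_differentiable by blast
  have "((\<lambda>s. \<phi> (v$i + s * h$i)) has_real_derivative deriv \<phi> (v$i + s * h$i) * h$i) (at s)" for i
  proof -
    have "((\<lambda>s. v$i + s * h$i) has_real_derivative h$i) (at s)"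
      by (auto intro!: derivative_eq_intros)
    from DERIV_chain2[OF dphi this] show ?thesis .
  qed
  then have "((\<lambda>s. \<Prod>i\<in>UNIV. \<phi> (v$i + s * h$i)) has_derivative
      (\<lambda>y. \<Sum>i\<in>UNIV. (deriv \<phi> (v$i + s * h$i) * h$i * y) * (\<Prod>j\<in>UNIV - {i}. \<phi> (v$j + s * h$j)))) (at s)"
    unfolding has_field_derivative_def by (rule has_derivative_prod)
  moreover have "(\<lambda>y. \<Sum>i\<in>UNIV. (deriv \<phi> (v$i + s * h$i) * h$i * y) * (\<Prod>j\<in>UNIV - {i}. \<phi> (v$j + s * h$j)))
      = (*) (Psi_dir_deriv \<sigma> (v + s *\<^sub>R h) h)"
    unfolding Psi_dir_deriv_def by (rule ext) (simp add: sum_distrib_left sum_distrib_right mult_ac)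
  ultimately show ?thesis
    unfolding has_field_derivative_def Psi_sigma_def by simp
qed

text \<open>For each coordinate, \<open>\<lfloor>n x\<^sub>i\<rfloor>\<close> clamped to the admissible index range stays within
  distance \<open>2\<close> of \<open>n x\<^sub>i\<close>, where \<open>\<phi>\<close> is bounded below.\<close>
lemma sum_Kset_Psi_lower_bound:
  "\<exists>c>0. \<forall>n (a::real^'n::finite) b x. (\<forall>i. 3 \<le> real n * (b$i - a$i)) \<longrightarrow> x \<in> cbox a b \<longrightarrow>
     c \<le> (\<Sum>k\<in>Kset a b n. Psi_sigma \<sigma> (real n *\<^sub>R x - kvec k))"
proof -
  obtain c where c: "c > 0" "\<And>s. \<bar>s\<bar> \<le> 2 \<Longrightarrow> c \<le> \<phi> s"
    using phi_lower_bound by blast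
  have "c ^ CARD('n) \<le> (\<Sum>k\<in>Kset a b n. Psi_sigma \<sigma> (real n *\<^sub>R x - kvec k))"
    if ab: "\<forall>i. 3 \<le> real n * (b$i - a$i)" and x: "x \<in> cbox a b" for n and a b x :: "real^'n"
  proof -
    define k where "k = (\<chi> i. min (max \<lfloor>real n * x$i\<rfloor> \<lceil>real n * a$i\<rceil>) (\<lfloor>real n * b$i\<rfloor> - 1))"
    have k: "\<lceil>real n * a$i\<rceil> \<le> k$i \<and> k$i \<le> \<lfloor>real n * b$i\<rfloor> - 1
        \<and> \<bar>real n * x$i - real_of_int (k$i)\<bar> \<le> 2" for i
    proof -
      have "real n * a$i \<le> real n * x$i" "real n * x$i \<le> real n * b$i"
        using x by (auto intro: mult_left_mono simp: mem_box_cart)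
      moreover have "real n * b$i - real n * a$i \<ge> 3"
        using ab by (simp add: algebra_simps)
      moreover have "\<lceil>real n * a$i\<rceil> \<le> \<lfloor>real n * b$i\<rfloor> - 1"
        using calculation(3) by linarith
      ultimately show ?thesis
        unfolding k_def by (auto simp: min_def max_def abs_if) linarith+
    qed
    then have "k \<in> Kset a b n"
      unfolding Kset_def by auto
    have "c ^ CARD('n) = (\<Prod>i\<in>(UNIV::'n set). c)"
      by simp
    also have "\<dots> \<le> (\<Prod>i\<in>UNIV. \<phi> (real n * x$i - real_of_int (k$i)))"
      using c k by (intro prod_mono) auto
    also have "\<dots> = Psi_sigma \<sigma> (real n *\<^sub>R x - kvec k)"
      by (simp add: Psi_sigma_scaleR_minus_kvec)
    also have "\<dots> \<le> (\<Sum>k\<in>Kset a b n. Psi_sigma \<sigma> (real n *\<^sub>R x - kvec k))"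
      using \<open>k \<in> Kset a b n\<close> finite_Kset by (intro member_le_sum Psi_sigma_nonneg)
    finally show ?thesis .
  qed
  moreover have "c ^ CARD('n) > 0"
    using c by simp
  ultimately show ?thesis
    by blast
qed

end

locale sigmoidal_C2 = sigmoidal +
  assumes deriv_sigma_differentiable: "\<And>x. deriv \<sigma> differentiable (at x)"
    and M_beta_1_deriv_phi: "M_beta 1 (deriv (phi_sigma \<sigma>)) < top"
begin

lemma isCont_deriv_sigma: "isCont (deriv \<sigma>) x"
  using deriv_sigma_differentiable differentiable_imp_continuous_within by blast

lemma isCont_deriv_phi: "isCont (deriv \<phi>) x"
proof -
  have dsigma: "(\<sigma> has_real_derivative deriv \<sigma> y) (at y)" for y
    using sigma_differentiable DERIV_deriv_iff_real_differentiable by blast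
  have "deriv \<phi> = (\<lambda>y. (deriv \<sigma> (y + 1) - deriv \<sigma> (y - 1)) / 2)"
  proof (rule ext, rule DERIV_imp_deriv)
    fix y
    have "((\<lambda>y. \<sigma> (y + c)) has_real_derivative deriv \<sigma> (y + c)) (at y)" for c
    proof -
      have "((\<lambda>y. y + c) has_real_derivative 1) (at y)"
        by (auto intro!: derivative_eq_intros)
      from DERIV_chain2[OF dsigma this] show ?thesis
        by simp
    qed
    from this[of 1] this[of "-1"]
    show "(\<phi> has_real_derivative (deriv \<sigma> (y + 1) - deriv \<sigma> (y - 1)) / 2) (at y)"
      unfolding phi_sigma_def[abs_def] by (auto intro!: DERIV_cdivide DERIV_diff)
  qed
  moreover have "isCont (\<lambda>y. (deriv \<sigma> (y + 1) - deriv \<sigma> (y - 1)) / 2) x"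
    by (intro continuous_intros isCont_o2[OF _ isCont_deriv_sigma]) auto
  ultimately show ?thesis
    by (simp only:)
qed

lemma lattice_sum_bounded_deriv_phi_weighted: "lattice_sum_bounded (\<lambda>s. \<bar>deriv \<phi> s\<bar> * (1 + \<bar>s\<bar>))"
proof -
  have "compact (deriv \<phi> ` {-1..1})"
    using isCont_deriv_phi by (intro compact_continuous_image continuous_at_imp_continuous_on) auto
  then obtain B where B: "\<And>s. \<bar>s\<bar> \<le> 1 \<Longrightarrow> \<bar>deriv \<phi> s\<bar> \<le> B"
    by (fastforce dest: compact_imp_bounded simp: bounded_iff abs_le_iff)
  have "lattice_sum_bounded (\<lambda>s. 2 * (\<bar>deriv \<phi> s\<bar> * \<bar>s\<bar>) + (if \<bar>s\<bar> \<le> 1 then 2 * B else 0))"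
  proof (intro lattice_sum_bounded_add lattice_sum_bounded_cmult)
    show "lattice_sum_bounded (\<lambda>s. \<bar>deriv \<phi> s\<bar> * \<bar>s\<bar>)"
      using M_beta_1_deriv_phi by (rule lattice_sum_bounded_M_beta_1)
    show "lattice_sum_bounded (\<lambda>s. if \<bar>s\<bar> \<le> 1 then 2 * B else 0)"
      by (rule lattice_sum_bounded_powr_tail[OF alpha_gt_1, of 1 _ "2 * B" 0]) auto
  qed simp
  moreover have "\<bar>deriv \<phi> s\<bar> * (1 + \<bar>s\<bar>) \<le> 2 * (\<bar>deriv \<phi> s\<bar> * \<bar>s\<bar>) + (if \<bar>s\<bar> \<le> 1 then 2 * B else 0)" for s
  proof (cases "\<bar>s\<bar> \<le> 1")
    case True
    then have "\<bar>deriv \<phi> s\<bar> * (1 + \<bar>s\<bar>) \<le> B * 2"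
      using B[of s] by (intro mult_mono) auto
    moreover have "0 \<le> \<bar>deriv \<phi> s\<bar> * \<bar>s\<bar>"
      by simp
    ultimately have "\<bar>deriv \<phi> s\<bar> * (1 + \<bar>s\<bar>) \<le> 2 * (\<bar>deriv \<phi> s\<bar> * \<bar>s\<bar>) + 2 * B"
      by linarith
    then show ?thesis
      using True by simp
  next
    case False
    then have "\<bar>deriv \<phi> s\<bar> * 1 \<le> \<bar>deriv \<phi> s\<bar> * \<bar>s\<bar>"
      by (intro mult_left_mono) auto
    then have "\<bar>deriv \<phi> s\<bar> * (1 + \<bar>s\<bar>) \<le> 2 * (\<bar>deriv \<phi> s\<bar> * \<bar>s\<bar>)"
      unfolding distrib_left by linarith
    then show ?thesis
      using False by simp
  qed
  ultimately show ?thesis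
    by (rule lattice_sum_bounded_mono)
qed

lemma abs_Psi_dir_deriv_weighted_le:
  fixes w h :: "real^'n::finite"
  shows "\<bar>Psi_dir_deriv \<sigma> w h\<bar> * (\<Prod>j\<in>UNIV. 1 + \<bar>w$j\<bar>)
    \<le> (\<Sum>i\<in>UNIV. \<bar>h$i\<bar> * (\<Prod>j\<in>UNIV. (if j = i then \<bar>deriv \<phi> (w$j)\<bar> else \<phi> (w$j)) * (1 + \<bar>w$j\<bar>)))"
proof -
  have split: "(\<Prod>j\<in>UNIV. (if j = i then \<bar>deriv \<phi> (w$j)\<bar> else \<phi> (w$j)) * (1 + \<bar>w$j\<bar>))
      = \<bar>deriv \<phi> (w$i) * (\<Prod>j\<in>UNIV - {i}. \<phi> (w$j))\<bar> * (\<Prod>j\<in>UNIV. 1 + \<bar>w$j\<bar>)" for i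
  proof -
    have "(\<Prod>j\<in>UNIV. if j = i then \<bar>deriv \<phi> (w$j)\<bar> else \<phi> (w$j))
        = (if i = i then \<bar>deriv \<phi> (w$i)\<bar> else \<phi> (w$i))
          * (\<Prod>j\<in>UNIV - {i}. if j = i then \<bar>deriv \<phi> (w$j)\<bar> else \<phi> (w$j))"
      by (rule prod.remove) auto
    also have "(\<Prod>j\<in>UNIV - {i}. if j = i then \<bar>deriv \<phi> (w$j)\<bar> else \<phi> (w$j)) = (\<Prod>j\<in>UNIV - {i}. \<phi> (w$j))"
      by (rule prod.cong) auto
    finally show ?thesis
      unfolding prod.distrib by (simp add: abs_mult phi_nonneg prod_nonneg)
  qed
  have "\<bar>Psi_dir_deriv \<sigma> w h\<bar> \<le> (\<Sum>i\<in>UNIV. \<bar>h$i\<bar> * \<bar>deriv \<phi> (w$i) * (\<Prod>j\<in>UNIV - {i}. \<phi> (w$j))\<bar>)"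
    unfolding Psi_dir_deriv_def by (rule order_trans[OF sum_abs]) (simp add: abs_mult mult.assoc)
  then have "\<bar>Psi_dir_deriv \<sigma> w h\<bar> * (\<Prod>j\<in>UNIV. 1 + \<bar>w$j\<bar>)
      \<le> (\<Sum>i\<in>UNIV. \<bar>h$i\<bar> * \<bar>deriv \<phi> (w$i) * (\<Prod>j\<in>UNIV - {i}. \<phi> (w$j))\<bar>) * (\<Prod>j\<in>UNIV. 1 + \<bar>w$j\<bar>)"
    by (rule mult_right_mono) (simp add: prod_nonneg)
  then show ?thesis
    unfolding split sum_distrib_right by (simp add: mult.assoc)
qed

lemma sum_Kset_Psi_dir_deriv_le:
  "\<exists>C\<ge>0. \<forall>n (a::real^'n::finite) b v h.
     (\<Sum>k\<in>Kset a b n. \<bar>Psi_dir_deriv \<sigma> (v - kvec k) h\<bar> * (\<Prod>j\<in>UNIV. 1 + \<bar>v$j - real_of_int (k$j)\<bar>))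
       \<le> C * (\<Sum>i\<in>UNIV. \<bar>h$i\<bar>)"
proof -
  define g where "g s = \<phi> s * (1 + \<bar>s\<bar>)" for s
  define g' where "g' s = \<bar>deriv \<phi> s\<bar> * (1 + \<bar>s\<bar>)" for s
  obtain C where "C \<ge> 0" and C: "\<And>n (a::real^'n) b t i.
      (\<Sum>k\<in>Kset a b n. \<Prod>j\<in>UNIV. (if j = i then g' else g) (t j - real_of_int (k$j))) \<le> C"
    using sum_Kset_prod_one_factor_le[of g g'] lattice_sum_bounded_phi_weighted
      lattice_sum_bounded_deriv_phi_weighted phi_nonneg unfolding g_def g'_def by auto
  have "(\<Sum>k\<in>Kset a b n. \<bar>Psi_dir_deriv \<sigma> (v - kvec k) h\<bar> * (\<Prod>j\<in>UNIV. 1 + \<bar>v$j - real_of_int (k$j)\<bar>))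
       \<le> C * (\<Sum>i\<in>UNIV. \<bar>h$i\<bar>)" for n and a b v h :: "real^'n"
  proof -
    have component: "(v - kvec k) $ j = v$j - real_of_int (k$j)" for k j
      by (simp add: kvec_def)
    have factor: "(if j = i then \<bar>deriv \<phi> s\<bar> else \<phi> s) * (1 + \<bar>s\<bar>) = (if j = i then g' else g) s"
      for i j :: 'n and s
      unfolding g_def g'_def by simp
    have "(\<Sum>k\<in>Kset a b n. \<bar>Psi_dir_deriv \<sigma> (v - kvec k) h\<bar> * (\<Prod>j\<in>UNIV. 1 + \<bar>v$j - real_of_int (k$j)\<bar>))
        \<le> (\<Sum>k\<in>Kset a b n. \<Sum>i\<in>UNIV. \<bar>h$i\<bar> * (\<Prod>j\<in>UNIV. (if j = i then g' else g) (v$j - real_of_int (k$j))))"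
      using abs_Psi_dir_deriv_weighted_le[of "v - kvec _" h] unfolding component factor by (rule sum_mono)
    also have "\<dots> = (\<Sum>i\<in>UNIV. \<bar>h$i\<bar>
        * (\<Sum>k\<in>Kset a b n. \<Prod>j\<in>UNIV. (if j = i then g' else g) (v$j - real_of_int (k$j))))"
      by (simp add: sum.swap[of _ "Kset a b n"] sum_distrib_left)
    also have "\<dots> \<le> (\<Sum>i\<in>UNIV. \<bar>h$i\<bar> * C)"
      using C by (intro sum_mono mult_left_mono) auto
    finally show ?thesis
      by (simp add: sum_distrib_left mult.commute)
  qed
  then show ?thesis
    using \<open>C \<ge> 0\<close> by blast
qed

end

section \<open>Modulus of continuity\<close>

lemma abs_integral_minus_content_mult_le:
  fixes f :: "'a::euclidean_space \<Rightarrow> real"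
  assumes "continuous_on (cbox lo hi) f" "\<And>u. u \<in> cbox lo hi \<Longrightarrow> \<bar>f u - c\<bar> \<le> E" "cbox lo hi \<noteq> {}"
  shows "\<bar>integral (cbox lo hi) f - Henstock_Kurzweil_Integration.content (cbox lo hi) * c\<bar> \<le> E * Henstock_Kurzweil_Integration.content (cbox lo hi)"
proof -
  have "f integrable_on cbox lo hi"
    using assms(1) by (rule integrable_continuous)
  then have "integral (cbox lo hi) (\<lambda>u. f u - c) = integral (cbox lo hi) f - Henstock_Kurzweil_Integration.content (cbox lo hi) * c"
    by (subst integral_diff) auto
  moreover have "norm (integral (cbox lo hi) (\<lambda>u. f u - c)) \<le> E * Henstock_Kurzweil_Integration.content (cbox lo hi)"
  proof (rule has_integral_bound)
    obtain u where "u \<in> cbox lo hi"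
      using assms(3) by blast
    then show "0 \<le> E"
      using assms(2)[of u] by linarith
    show "((\<lambda>u. f u - c) has_integral integral (cbox lo hi) (\<lambda>u. f u - c)) (cbox lo hi)"
      using \<open>f integrable_on cbox lo hi\<close> by (intro integrable_integral integrable_diff) auto
  qed (use assms(2) in auto)
  ultimately show ?thesis
    by simp
qed

locale compact_convex_continuous =
  fixes I :: "(real^'n::finite) set" and f :: "real^'n \<Rightarrow> real"
  assumes compact_I: "compact I" and convex_I: "convex I" and I_nonempty: "I \<noteq> {}"
    and continuous_f: "continuous_on I f"
begin

abbreviation "\<omega> \<equiv> modcont I f"

lemma abs_f_bounded: "\<exists>B. \<forall>x\<in>I. \<bar>f x\<bar> \<le> B"
  using compact_imp_bounded[OF compact_continuous_image[OF continuous_f compact_I]]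
  by (auto simp: bounded_iff)

lemma bdd_above_modcont: "bdd_above {\<bar>f x - f y\<bar> | x y. x \<in> I \<and> y \<in> I \<and> norm (x - y) \<le> \<delta>}"
proof -
  obtain B where B: "\<And>x. x \<in> I \<Longrightarrow> \<bar>f x\<bar> \<le> B"
    using abs_f_bounded by blast
  show ?thesis
  proof (rule bdd_aboveI[of _ "2 * B"])
    fix r assume "r \<in> {\<bar>f x - f y\<bar> | x y. x \<in> I \<and> y \<in> I \<and> norm (x - y) \<le> \<delta>}"
    then obtain x y where "r = \<bar>f x - f y\<bar>" "x \<in> I" "y \<in> I"
      by blast
    then show "r \<le> 2 * B"
      using B[of x] B[of y] by linarith
  qed
qed

lemma abs_diff_le_modcont:
  assumes "x \<in> I" "y \<in> I" "norm (x - y) \<le> \<delta>"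
  shows "\<bar>f x - f y\<bar> \<le> \<omega> \<delta>"
  unfolding modcont_def using assms by (intro cSup_upper[OF _ bdd_above_modcont]) blast

lemma modcont_le:
  assumes "\<delta> \<ge> 0" "\<And>x y. x \<in> I \<Longrightarrow> y \<in> I \<Longrightarrow> norm (x - y) \<le> \<delta> \<Longrightarrow> \<bar>f x - f y\<bar> \<le> M"
  shows "\<omega> \<delta> \<le> M"
  unfolding modcont_def
proof (rule cSup_least)
  obtain x where "x \<in> I"
    using I_nonempty by blast
  then show "{\<bar>f x - f y\<bar> | x y. x \<in> I \<and> y \<in> I \<and> norm (x - y) \<le> \<delta>} \<noteq> {}"
    using assms(1) by force
qed (use assms(2) in blast)

lemma modcont_nonneg:
  assumes "\<delta> \<ge> 0"
  shows "\<omega> \<delta> \<ge> 0"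
proof -
  obtain x where "x \<in> I"
    using I_nonempty by blast
  then have "\<bar>f x - f x\<bar> \<le> \<omega> \<delta>"
    using assms by (intro abs_diff_le_modcont) auto
  then show ?thesis
    by simp
qed

lemma modcont_bounded: "\<exists>B. \<forall>\<delta>\<ge>0. \<omega> \<delta> \<le> B"
proof -
  obtain B where B: "\<And>x. x \<in> I \<Longrightarrow> \<bar>f x\<bar> \<le> B"
    using abs_f_bounded by blast
  have "\<omega> \<delta> \<le> 2 * B" if "\<delta> \<ge> 0" for \<delta>
  proof (rule modcont_le[OF that])
    fix x y assume "x \<in> I" "y \<in> I"
    then show "\<bar>f x - f y\<bar> \<le> 2 * B"
      using B[of x] B[of y] by linarith
  qed
  then show ?thesis
    by blast
qed

lemma abs_diff_le_mult_modcont: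
  assumes x: "x \<in> I" and y: "y \<in> I" and "m > 0" and xy: "norm (x - y) \<le> real m * \<delta>"
  shows "\<bar>f x - f y\<bar> \<le> real m * \<omega> \<delta>"
proof -
  define p where "p j = x + (real j / real m) *\<^sub>R (y - x)" for j
  have p_in_I: "p j \<in> I" if "j \<le> m" for j
  proof -
    have "p j = (1 - real j / real m) *\<^sub>R x + (real j / real m) *\<^sub>R y"
      unfolding p_def by (simp add: algebra_simps)
    then show ?thesis
      using convexD[OF convex_I x y] that \<open>m > 0\<close> by (simp add: divide_le_eq_1)
  qed
  have step: "\<bar>f (p (Suc j)) - f (p j)\<bar> \<le> \<omega> \<delta>" if "j < m" for j
  proof (rule abs_diff_le_modcont)
    have "p (Suc j) - p j = (1 / real m) *\<^sub>R (y - x)"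
      unfolding p_def by (simp add: algebra_simps add_divide_distrib)
    then show "norm (p (Suc j) - p j) \<le> \<delta>"
      using xy \<open>m > 0\<close> by (simp add: norm_minus_commute divide_le_eq mult.commute)
  qed (use p_in_I that in auto)
  have "\<bar>f x - f y\<bar> = \<bar>\<Sum>j<m. f (p (Suc j)) - f (p j)\<bar>"
    using \<open>m > 0\<close> by (subst sum_lessThan_telescope) (simp add: p_def abs_minus_commute)
  also have "\<dots> \<le> (\<Sum>j<m. \<omega> \<delta>)"
    using step by (intro order_trans[OF sum_abs] sum_mono) auto
  finally show ?thesis
    by simp
qed

lemma modcont_mult_le:
  assumes "L \<ge> 0" "\<delta> > 0"
  shows "\<omega> (L * \<delta>) \<le> (1 + L) * \<omega> \<delta>"
proof (rule modcont_le)
  show "L * \<delta> \<ge> 0"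
    using assms by simp
  fix x y assume x: "x \<in> I" and y: "y \<in> I" and xy: "norm (x - y) \<le> L * \<delta>"
  have "\<omega> \<delta> \<ge> 0"
    using assms by (intro modcont_nonneg) auto
  define m where "m = nat \<lceil>L\<rceil>"
  show "\<bar>f x - f y\<bar> \<le> (1 + L) * \<omega> \<delta>"
  proof (cases "m = 0")
    case True
    then have "x = y"
      using assms xy unfolding m_def by simp
    then show ?thesis
      using \<open>\<omega> \<delta> \<ge> 0\<close> assms by simp
  next
    case False
    then have m: "L \<le> real m" "real m \<le> 1 + L"
      unfolding m_def using assms by linarith+
    have "norm (x - y) \<le> real m * \<delta>"
      using xy m assms by (meson mult_right_mono less_imp_le order_trans)
    then have "\<bar>f x - f y\<bar> \<le> real m * \<omega> \<delta>"
      using x y False by (intro abs_diff_le_mult_modcont) auto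
    also have "\<dots> \<le> (1 + L) * \<omega> \<delta>"
      using m \<open>\<omega> \<delta> \<ge> 0\<close> by (intro mult_right_mono) auto
    finally show ?thesis .
  qed
qed

lemma abs_diff_le_modcont_Rbox:
  assumes n: "0 < n" and R: "Rbox k n \<subseteq> I" and z: "z \<in> I" and u: "u \<in> Rbox k n"
  shows "\<bar>f u - f z\<bar>
    \<le> (1 + real CARD('n)) * \<omega> (1 / real n) * (\<Prod>j\<in>UNIV. 1 + \<bar>real n * z$j - real_of_int (k$j)\<bar>)"
proof -
  define d where "d = real CARD('n)"
  define Q where "Q = (\<Prod>j\<in>UNIV. 1 + \<bar>real n * z$j - real_of_int (k$j)\<bar>)"
  have "Q \<ge> 1"
    unfolding Q_def by (intro prod_ge_1) auto
  have "real n * \<bar>u$j - z$j\<bar> \<le> Q" for j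
  proof -
    have "\<bar>real n * u$j - real n * z$j\<bar> \<le> 1 + \<bar>real n * z$j - real_of_int (k$j)\<bar>"
      using mem_Rbox_scaled[OF u n, of j] by linarith
    also have "\<dots> \<le> Q"
      unfolding Q_def by (rule one_plus_abs_le_prod)
    finally show ?thesis
      by (simp add: right_diff_distrib[symmetric] abs_mult)
  qed
  then have "\<bar>(u - z)$j\<bar> \<le> Q * (1 / real n)" for j
    using n by (simp add: field_simps)
  then have "norm (u - z) \<le> (d * Q) * (1 / real n)"
    using norm_le_l1_cart[of "u - z"] sum_mono[of UNIV "\<lambda>j. \<bar>(u - z)$j\<bar>" "\<lambda>_. Q * (1 / real n)"]
    unfolding d_def by (simp add: mult.assoc)
  then have "\<bar>f u - f z\<bar> \<le> \<omega> ((d * Q) * (1 / real n))"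
    using u R z by (intro abs_diff_le_modcont) auto
  also have "\<dots> \<le> (1 + d * Q) * \<omega> (1 / real n)"
    using \<open>Q \<ge> 1\<close> n unfolding d_def by (intro modcont_mult_le) auto
  also have "\<dots> \<le> (1 + d) * \<omega> (1 / real n) * Q"
    using \<open>Q \<ge> 1\<close> modcont_nonneg[of "1 / real n"] unfolding d_def
    by (simp add: algebra_simps mult_le_cancel_right1)
  finally show ?thesis
    unfolding d_def Q_def .
qed

lemma scaled_integral_Rbox_minus_le:
  assumes n: "0 < n" and R: "Rbox k n \<subseteq> I" and z: "z \<in> I"
  shows "\<bar>real n ^ CARD('n) * integral (Rbox k n) f - f z\<bar>
    \<le> (1 + real CARD('n)) * \<omega> (1 / real n) * (\<Prod>j\<in>UNIV. 1 + \<bar>real n * z$j - real_of_int (k$j)\<bar>)"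
    (is "_ \<le> ?X")
proof -
  have nc: "real n ^ CARD('n) * Henstock_Kurzweil_Integration.content (Rbox k n) = 1"
    using n by (simp add: content_Rbox power_one_over[symmetric] power_mult_distrib[symmetric])
  obtain lo hi where box: "Rbox k n = cbox lo hi"
    unfolding Rbox_def by blast
  have "\<bar>integral (Rbox k n) f - Henstock_Kurzweil_Integration.content (Rbox k n) * f z\<bar>
      \<le> ?X * Henstock_Kurzweil_Integration.content (Rbox k n)"
    unfolding box
  proof (rule abs_integral_minus_content_mult_le)
    show "continuous_on (cbox lo hi) f"
      using continuous_on_subset[OF continuous_f R] unfolding box .
    show "cbox lo hi \<noteq> {}"
      using nc unfolding box by auto
  qed (use abs_diff_le_modcont_Rbox[OF n R z] box in auto)
  from mult_left_mono[OF this, of "real n ^ CARD('n)"]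
  have "real n ^ CARD('n) * \<bar>integral (Rbox k n) f - Henstock_Kurzweil_Integration.content (Rbox k n) * f z\<bar>
      \<le> ?X * (real n ^ CARD('n) * Henstock_Kurzweil_Integration.content (Rbox k n))"
    by (simp add: ac_simps)
  moreover have "real n ^ CARD('n) * integral (Rbox k n) f - f z
      = real n ^ CARD('n) * (integral (Rbox k n) f - Henstock_Kurzweil_Integration.content (Rbox k n) * f z)"
    by (simp add: right_diff_distrib mult.assoc[symmetric] nc)
  ultimately show ?thesis
    unfolding nc by (simp add: abs_mult)
qed

end

section \<open>Kantorovich operators\<close>

text \<open>Shifting all weights \<open>F k\<close> by a constant \<open>e\<close> does not change the derivative of the average;
  with \<open>e = f z\<close> this recentring brings in the modulus of continuity.\<close>
lemma weighted_average_mean_value: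
  fixes P P' :: "'k \<Rightarrow> real \<Rightarrow> real" and F :: "'k \<Rightarrow> real"
  assumes deriv: "\<And>k s. (P k has_real_derivative P' k s) (at s)"
    and pos: "\<forall>s\<in>{0..1}. (\<Sum>k\<in>K. P k s) > 0"
  obtains \<xi> where "\<xi> \<in> {0<..<1}"
    "\<And>e. (\<Sum>k\<in>K. F k * P k 1) / (\<Sum>k\<in>K. P k 1) - (\<Sum>k\<in>K. F k * P k 0) / (\<Sum>k\<in>K. P k 0)
       = ((\<Sum>k\<in>K. (F k - e) * P' k \<xi>) + (e - (\<Sum>k\<in>K. F k * P k \<xi>) / (\<Sum>k\<in>K. P k \<xi>)) * (\<Sum>k\<in>K. P' k \<xi>))
         / (\<Sum>k\<in>K. P k \<xi>)"
proof -
  define N where "N s = (\<Sum>k\<in>K. F k * P k s)" for s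
  define D where "D s = (\<Sum>k\<in>K. P k s)" for s
  define N' where "N' s = (\<Sum>k\<in>K. F k * P' k s)" for s
  define D' where "D' s = (\<Sum>k\<in>K. P' k s)" for s
  have dN: "(N has_real_derivative N' s) (at s)" and dD: "(D has_real_derivative D' s) (at s)" for s
    unfolding N_def N'_def D_def D'_def by (intro DERIV_sum DERIV_cmult deriv)+
  have dQ: "((\<lambda>s. N s / D s) has_real_derivative (N' s * D s - N s * D' s) / (D s * D s)) (at s)"
    if "0 \<le> s" "s \<le> 1" for s
  proof (rule DERIV_divide[OF dN dD])
    show "D s \<noteq> 0"
      using bspec[OF pos, of s] that unfolding D_def by auto
  qed
  obtain \<xi> where \<xi>: "0 < \<xi>" "\<xi> < 1"
    "N 1 / D 1 - N 0 / D 0 = (1 - 0) * ((N' \<xi> * D \<xi> - N \<xi> * D' \<xi>) / (D \<xi> * D \<xi>))"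
    using MVT2[of 0 1 "\<lambda>s. N s / D s", OF _ dQ] by auto
  have "D \<xi> \<noteq> 0"
    using bspec[OF pos, of \<xi>] \<xi> unfolding D_def by auto
  have "N 1 / D 1 - N 0 / D 0 = ((N' \<xi> - e * D' \<xi>) + (e - N \<xi> / D \<xi>) * D' \<xi>) / D \<xi>" for e
    using \<xi>(3) \<open>D \<xi> \<noteq> 0\<close> by (simp add: field_simps)
  moreover have "N' \<xi> - e * D' \<xi> = (\<Sum>k\<in>K. (F k - e) * P' k \<xi>)" for e
    unfolding N'_def D'_def by (simp add: left_diff_distrib sum_subtractf sum_distrib_left)
  ultimately have mean_value:
    "N 1 / D 1 - N 0 / D 0 = ((\<Sum>k\<in>K. (F k - e) * P' k \<xi>) + (e - N \<xi> / D \<xi>) * D' \<xi>) / D \<xi>" for e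
    by simp
  have "\<xi> \<in> {0<..<1}"
    using \<xi>(1,2) by simp
  then show ?thesis
    using mean_value unfolding N_def D_def D'_def by (rule that)
qed

lemma sum_abs_component_le_card_mult_norm:
  fixes x :: "real^'n::finite"
  shows "(\<Sum>i\<in>UNIV. \<bar>x$i\<bar>) \<le> real CARD('n) * norm x"
proof -
  have "(\<Sum>i\<in>UNIV. \<bar>x$i\<bar>) \<le> (\<Sum>i\<in>(UNIV::'n set). norm x)"
    by (intro sum_mono component_le_norm_cart)
  then show ?thesis
    by simp
qed

locale kantorovich = sigmoidal_C2 \<sigma> \<alpha> + compact_convex_continuous "cbox a b" f
  for \<sigma> \<alpha> and a b :: "real^'n::finite" and f +
  assumes a_lt_b: "\<And>i. a$i < b$i"
begin

lemma eventually_Kset_wide: "\<forall>\<^sub>F n in sequentially. \<forall>i. 3 \<le> real n * (b$i - a$i)"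
proof (rule eventually_all_finite)
  fix i
  have "\<forall>\<^sub>F n in sequentially. 3 / (b$i - a$i) \<le> real n"
    using filterlim_real_sequentially unfolding filterlim_at_top by blast
  then show "\<forall>\<^sub>F n in sequentially. 3 \<le> real n * (b$i - a$i)"
    by eventually_elim (use a_lt_b[of i] in \<open>simp add: divide_le_eq\<close>)
qed

lemma abs_recentred_numerator_le:
  assumes n: "0 < n" and z: "z \<in> cbox a b" and E: "\<bar>f z - KNN \<sigma> a b n f z\<bar> \<le> E"
  shows "\<bar>(\<Sum>k\<in>Kset a b n. (real n ^ CARD('n) * integral (Rbox k n) f - f z) * p k)
      + (f z - KNN \<sigma> a b n f z) * (\<Sum>k\<in>Kset a b n. p k)\<bar>
    \<le> ((1 + real CARD('n)) * \<omega> (1 / real n) + E)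
       * (\<Sum>k\<in>Kset a b n. \<bar>p k\<bar> * (\<Prod>j\<in>UNIV. 1 + \<bar>real n * z$j - real_of_int (k$j)\<bar>))"
proof -
  define Q where "Q k = (\<Prod>j\<in>UNIV. 1 + \<bar>real n * z$j - real_of_int (k$j)\<bar>)" for k
  define X where "X = (1 + real CARD('n)) * \<omega> (1 / real n)"
  have "\<bar>\<Sum>k\<in>Kset a b n. (real n ^ CARD('n) * integral (Rbox k n) f - f z) * p k\<bar>
      \<le> (\<Sum>k\<in>Kset a b n. \<bar>real n ^ CARD('n) * integral (Rbox k n) f - f z\<bar> * \<bar>p k\<bar>)"
    by (rule order_trans[OF sum_abs]) (simp add: abs_mult)
  also have "\<dots> \<le> (\<Sum>k\<in>Kset a b n. X * Q k * \<bar>p k\<bar>)"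
  proof (rule sum_mono)
    fix k assume "k \<in> Kset a b n"
    from scaled_integral_Rbox_minus_le[OF n Rbox_subset_cbox[OF this n] z]
    show "\<bar>real n ^ CARD('n) * integral (Rbox k n) f - f z\<bar> * \<bar>p k\<bar> \<le> X * Q k * \<bar>p k\<bar>"
      unfolding X_def Q_def by (rule mult_right_mono) simp
  qed
  finally have "\<bar>\<Sum>k\<in>Kset a b n. (real n ^ CARD('n) * integral (Rbox k n) f - f z) * p k\<bar>
      \<le> X * (\<Sum>k\<in>Kset a b n. \<bar>p k\<bar> * Q k)"
    by (simp add: sum_distrib_left mult_ac)
  moreover have "\<bar>\<Sum>k\<in>Kset a b n. p k\<bar> \<le> (\<Sum>k\<in>Kset a b n. \<bar>p k\<bar> * Q k)"
    unfolding Q_def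
    by (rule order_trans[OF sum_abs], intro sum_mono) (simp add: mult_le_cancel_left1 prod_ge_1)
  then have "\<bar>f z - KNN \<sigma> a b n f z\<bar> * \<bar>\<Sum>k\<in>Kset a b n. p k\<bar> \<le> E * (\<Sum>k\<in>Kset a b n. \<bar>p k\<bar> * Q k)"
    using E by (intro mult_mono) auto
  ultimately show ?thesis
    using abs_triangle_ineq[of "\<Sum>k\<in>Kset a b n. (real n ^ CARD('n) * integral (Rbox k n) f - f z) * p k"
        "(f z - KNN \<sigma> a b n f z) * (\<Sum>k\<in>Kset a b n. p k)"]
    unfolding abs_mult Q_def X_def distrib_right by linarith
qed

lemma KNN_mean_value:
  assumes wide: "\<forall>i. 3 \<le> real n * (b$i - a$i)" and x: "x \<in> cbox a b" and y: "y \<in> cbox a b"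
  obtains z where "z \<in> cbox a b"
    "KNN \<sigma> a b n f x - KNN \<sigma> a b n f y =
       ((\<Sum>k\<in>Kset a b n. (real n ^ CARD('n) * integral (Rbox k n) f - f z)
            * Psi_dir_deriv \<sigma> (real n *\<^sub>R z - kvec k) (real n *\<^sub>R (x - y)))
        + (f z - KNN \<sigma> a b n f z)
            * (\<Sum>k\<in>Kset a b n. Psi_dir_deriv \<sigma> (real n *\<^sub>R z - kvec k) (real n *\<^sub>R (x - y))))
       / (\<Sum>k\<in>Kset a b n. Psi_sigma \<sigma> (real n *\<^sub>R z - kvec k))"
proof -
  define u where "u s = y + s *\<^sub>R (x - y)" for s :: real
  define h where "h = real n *\<^sub>R (x - y)"
  have line: "real n *\<^sub>R u s - kvec k = (real n *\<^sub>R y - kvec k) + s *\<^sub>R h" for s k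
    unfolding u_def h_def by (simp add: algebra_simps)
  have u_in: "u s \<in> cbox a b" if "s \<in> {0..1}" for s
  proof -
    have "u s = (1 - s) *\<^sub>R y + s *\<^sub>R x"
      unfolding u_def by (simp add: algebra_simps)
    then show ?thesis
      using convexD[OF convex_I y x, of "1 - s" s] that by simp
  qed
  obtain c where "c > 0" "\<And>z. z \<in> cbox a b \<Longrightarrow> c \<le> (\<Sum>k\<in>Kset a b n. Psi_sigma \<sigma> (real n *\<^sub>R z - kvec k))"
    using sum_Kset_Psi_lower_bound wide by blast
  then have pos: "\<forall>s\<in>{0..1}. (\<Sum>k\<in>Kset a b n. Psi_sigma \<sigma> (real n *\<^sub>R u s - kvec k)) > 0"
    using u_in by fastforce
  have deriv: "((\<lambda>s. Psi_sigma \<sigma> (real n *\<^sub>R u s - kvec k))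
      has_real_derivative Psi_dir_deriv \<sigma> (real n *\<^sub>R u s - kvec k) h) (at s)" for k s
    unfolding line by (rule Psi_sigma_line_has_derivative)
  have "u 1 = x" "u 0 = y"
    unfolding u_def by simp_all
  show ?thesis
  proof (rule weighted_average_mean_value[where K = "Kset a b n"
        and F = "\<lambda>k. real n ^ CARD('n) * integral (Rbox k n) f", OF deriv pos], goal_cases)
    case (1 \<xi>)
    note \<xi> = 1
    show ?case
    proof (rule that[of "u \<xi>"], goal_cases)
      case 1
      show ?case
        using \<xi>(1) u_in by simp
    next
      case 2
      show ?case
        using \<xi>(2)[of "f (u \<xi>)"] unfolding KNN_def h_def \<open>u 1 = x\<close> \<open>u 0 = y\<close> .
    qed
  qed
qed

lemma KNN_diff_le:
  assumes wide: "\<forall>i. 3 \<le> real n * (b$i - a$i)"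
    and c: "c > 0" "\<forall>z\<in>cbox a b. c \<le> (\<Sum>k\<in>Kset a b n. Psi_sigma \<sigma> (real n *\<^sub>R z - kvec k))"
    and C: "C \<ge> 0" "\<And>v h. (\<Sum>k\<in>Kset a b n. \<bar>Psi_dir_deriv \<sigma> (v - kvec k) h\<bar> * (\<Prod>j\<in>UNIV. 1 + \<bar>v$j - real_of_int (k$j)\<bar>))
              \<le> C * (\<Sum>i\<in>UNIV. \<bar>h$i\<bar>)"
    and E: "\<forall>z\<in>cbox a b. \<bar>KNN \<sigma> a b n f z - f z\<bar> \<le> E"
    and x: "x \<in> cbox a b" and y: "y \<in> cbox a b"
  shows "\<bar>KNN \<sigma> a b n f x - KNN \<sigma> a b n f y\<bar>
    \<le> (1 + real CARD('n)) * C * real CARD('n) / c * real n * norm (x - y) * (\<omega> (1 / real n) + E)"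
proof -
  define d where "d = real CARD('n)"
  have "n > 0"
    using wide a_lt_b by (metis gr0I mult_zero_left not_le of_nat_0 zero_less_numeral)
  obtain z where z: "z \<in> cbox a b" and mean_value:
    "KNN \<sigma> a b n f x - KNN \<sigma> a b n f y =
     ((\<Sum>k\<in>Kset a b n. (real n ^ CARD('n) * integral (Rbox k n) f - f z)
          * Psi_dir_deriv \<sigma> (real n *\<^sub>R z - kvec k) (real n *\<^sub>R (x - y)))
      + (f z - KNN \<sigma> a b n f z)
          * (\<Sum>k\<in>Kset a b n. Psi_dir_deriv \<sigma> (real n *\<^sub>R z - kvec k) (real n *\<^sub>R (x - y))))
     / (\<Sum>k\<in>Kset a b n. Psi_sigma \<sigma> (real n *\<^sub>R z - kvec k))"
    by (rule KNN_mean_value[OF wide x y])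
  define p where "p k = Psi_dir_deriv \<sigma> (real n *\<^sub>R z - kvec k) (real n *\<^sub>R (x - y))" for k
  define T where "T = (\<Sum>k\<in>Kset a b n. \<bar>p k\<bar> * (\<Prod>j\<in>UNIV. 1 + \<bar>real n * z$j - real_of_int (k$j)\<bar>))"
  define W where "W = \<omega> (1 / real n)"
  have "E \<ge> 0" "W \<ge> 0"
    using E z modcont_nonneg[of "1 / real n"] unfolding W_def by (auto intro: order_trans[OF abs_ge_zero])
  have "T \<ge> 0"
    unfolding T_def by (intro sum_nonneg mult_nonneg_nonneg prod_nonneg) auto
  have "T \<le> C * (\<Sum>i\<in>UNIV. \<bar>(real n *\<^sub>R (x - y))$i\<bar>)"
    using C(2)[of "real n *\<^sub>R z" "real n *\<^sub>R (x - y)"] unfolding T_def p_def by simp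
  also have "\<dots> \<le> C * (real n * (d * norm (x - y)))"
    using C(1) sum_abs_component_le_card_mult_norm[of "x - y"] unfolding d_def
    by (simp add: abs_mult sum_distrib_left[symmetric] mult_left_mono)
  finally have T_le: "T \<le> C * real n * d * norm (x - y)"
    by (simp add: mult_ac)
  have "\<bar>f z - KNN \<sigma> a b n f z\<bar> \<le> E"
    using E z by (simp add: abs_minus_commute)
  from abs_recentred_numerator_le[OF \<open>n > 0\<close> z this, of p]
  have "\<bar>KNN \<sigma> a b n f x - KNN \<sigma> a b n f y\<bar> \<le> ((1 + d) * W + E) * T / c"
    unfolding mean_value p_def[symmetric] abs_divide d_def[symmetric] W_def[symmetric] T_def[symmetric]
    using c z \<open>E \<ge> 0\<close> \<open>W \<ge> 0\<close> by (intro frac_le) auto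
  also have "\<dots> \<le> (1 + d) * (W + E) * (C * real n * d * norm (x - y)) / c"
    using T_le \<open>T \<ge> 0\<close> c(1) \<open>E \<ge> 0\<close> \<open>W \<ge> 0\<close> unfolding d_def
    by (intro divide_right_mono mult_mono) (auto simp: algebra_simps)
  finally show ?thesis
    unfolding W_def d_def by (simp add: ac_simps)
qed

lemma KNN_Bernstein_inequality:
  "\<exists>A\<ge>0. \<forall>\<^sub>F n in sequentially. \<forall>E. (\<forall>z\<in>cbox a b. \<bar>KNN \<sigma> a b n f z - f z\<bar> \<le> E) \<longrightarrow>
     (\<forall>x\<in>cbox a b. \<forall>y\<in>cbox a b.
        \<bar>KNN \<sigma> a b n f x - KNN \<sigma> a b n f y\<bar> \<le> A * real n * norm (x - y) * (\<omega> (1 / real n) + E))"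
proof -
  obtain c where c: "c > 0" "\<And>n. \<forall>i. 3 \<le> real n * (b$i - a$i) \<Longrightarrow>
      \<forall>z\<in>cbox a b. c \<le> (\<Sum>k\<in>Kset a b n. Psi_sigma \<sigma> (real n *\<^sub>R z - kvec k))"
    using sum_Kset_Psi_lower_bound by blast
  obtain C where C: "C \<ge> 0" "\<And>n v h.
      (\<Sum>k\<in>Kset a b n. \<bar>Psi_dir_deriv \<sigma> (v - kvec k) h\<bar> * (\<Prod>j\<in>UNIV. 1 + \<bar>v$j - real_of_int (k$j)\<bar>))
        \<le> C * (\<Sum>i\<in>UNIV. \<bar>h$i\<bar>)"
    using sum_Kset_Psi_dir_deriv_le by blast
  define A where "A = (1 + real CARD('n)) * C * real CARD('n) / c"
  have "A \<ge> 0"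
    unfolding A_def using C(1) c(1) by simp
  moreover have "\<forall>\<^sub>F n in sequentially. \<forall>E. (\<forall>z\<in>cbox a b. \<bar>KNN \<sigma> a b n f z - f z\<bar> \<le> E) \<longrightarrow>
     (\<forall>x\<in>cbox a b. \<forall>y\<in>cbox a b.
        \<bar>KNN \<sigma> a b n f x - KNN \<sigma> a b n f y\<bar> \<le> A * real n * norm (x - y) * (\<omega> (1 / real n) + E))"
    using eventually_Kset_wide
  proof eventually_elim
    case (elim n)
    show ?case
    proof (intro allI impI ballI)
      fix E x y
      assume "\<forall>z\<in>cbox a b. \<bar>KNN \<sigma> a b n f z - f z\<bar> \<le> E" "x \<in> cbox a b" "y \<in> cbox a b"
      then show "\<bar>KNN \<sigma> a b n f x - KNN \<sigma> a b n f y\<bar> \<le> A * real n * norm (x - y) * (\<omega> (1 / real n) + E)"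
        unfolding A_def by (rule KNN_diff_le[OF elim c(1) c(2)[OF elim] C])
    qed
  qed
  ultimately show ?thesis
    by blast
qed

lemma modcont_le_of_Bernstein:
  assumes "A \<ge> 0" and approx: "\<forall>z\<in>cbox a b. \<bar>KNN \<sigma> a b n f z - f z\<bar> \<le> E"
    and lip: "\<forall>x\<in>cbox a b. \<forall>y\<in>cbox a b.
      \<bar>KNN \<sigma> a b n f x - KNN \<sigma> a b n f y\<bar> \<le> A * real n * norm (x - y) * (\<omega> (1 / real n) + E)"
    and \<delta>: "\<delta> > 0" "real n * \<delta> \<le> 1"
  shows "\<omega> \<delta> \<le> (2 + A) * E + A * (real n * \<delta> * \<omega> (1 / real n))"
proof (rule modcont_le)
  show "\<delta> \<ge> 0"
    using \<delta> by simp
  fix x y assume x: "x \<in> cbox a b" and y: "y \<in> cbox a b" and xy: "norm (x - y) \<le> \<delta>"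
  define W where "W = \<omega> (1 / real n)"
  have "E \<ge> 0" "W \<ge> 0"
    using approx x modcont_nonneg[of "1 / real n"] unfolding W_def by (auto intro: order_trans[OF abs_ge_zero])
  have "A * real n * norm (x - y) * (W + E) \<le> A * (real n * \<delta>) * (W + E)"
    using \<open>A \<ge> 0\<close> \<open>E \<ge> 0\<close> \<open>W \<ge> 0\<close> xy by (simp add: mult_left_mono mult_right_mono mult.assoc)
  also have "\<dots> = A * (real n * \<delta>) * W + (A * E) * (real n * \<delta>)"
    by (simp add: algebra_simps)
  also have "\<dots> \<le> A * (real n * \<delta>) * W + (A * E) * 1"
    using \<open>A \<ge> 0\<close> \<open>E \<ge> 0\<close> \<delta>(2) by (intro add_left_mono mult_left_mono) auto
  finally have "\<bar>KNN \<sigma> a b n f x - KNN \<sigma> a b n f y\<bar> \<le> A * (real n * \<delta>) * W + A * E * 1"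
    using lip x y unfolding W_def by (meson order_trans)
  moreover have "\<bar>KNN \<sigma> a b n f x - f x\<bar> \<le> E" "\<bar>KNN \<sigma> a b n f y - f y\<bar> \<le> E"
    using approx x y by auto
  ultimately show "\<bar>f x - f y\<bar> \<le> (2 + A) * E + A * (real n * \<delta> * \<omega> (1 / real n))"
    unfolding W_def by (simp add: algebra_simps)
qed

lemma modcont_recursive_bound:
  assumes rate: "\<forall>\<^sub>F n in sequentially. \<forall>x\<in>cbox a b. \<bar>KNN \<sigma> a b n f x - f x\<bar> \<le> C * real n powr - \<nu>"
  shows "\<exists>B\<ge>0. \<forall>\<^sub>F n in sequentially. \<forall>\<delta>>0. real n * \<delta> \<le> 1 \<longrightarrow>
           \<omega> \<delta> \<le> B * (real n powr - \<nu> + real n * \<delta> * \<omega> (1 / real n))"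
proof -
  obtain A where "A \<ge> 0" and bernstein:
    "\<forall>\<^sub>F n in sequentially. \<forall>E. (\<forall>z\<in>cbox a b. \<bar>KNN \<sigma> a b n f z - f z\<bar> \<le> E) \<longrightarrow>
       (\<forall>x\<in>cbox a b. \<forall>y\<in>cbox a b.
          \<bar>KNN \<sigma> a b n f x - KNN \<sigma> a b n f y\<bar> \<le> A * real n * norm (x - y) * (\<omega> (1 / real n) + E))"
    using KNN_Bernstein_inequality by blast
  define B where "B = (2 + A) * max C 0 + A"
  have "\<forall>\<^sub>F n in sequentially. \<forall>z\<in>cbox a b. \<bar>KNN \<sigma> a b n f z - f z\<bar> \<le> max C 0 * real n powr - \<nu>"
    using rate by eventually_elim (meson max.cobounded1 mult_right_mono order_trans powr_ge_zero)
  then have "\<forall>\<^sub>F n in sequentially. \<forall>\<delta>>0. real n * \<delta> \<le> 1 \<longrightarrow>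
      \<omega> \<delta> \<le> B * (real n powr - \<nu> + real n * \<delta> * \<omega> (1 / real n))"
    using bernstein
  proof eventually_elim
    case (elim n)
    show ?case
    proof (intro allI impI)
      fix \<delta> :: real assume "\<delta> > 0" "real n * \<delta> \<le> 1"
      have "\<omega> \<delta> \<le> (2 + A) * (max C 0 * real n powr - \<nu>) + A * (real n * \<delta> * \<omega> (1 / real n))"
        using elim \<open>A \<ge> 0\<close> \<open>\<delta> > 0\<close> \<open>real n * \<delta> \<le> 1\<close> by (intro modcont_le_of_Bernstein) auto
      also have "\<dots> \<le> B * (real n powr - \<nu> + real n * \<delta> * \<omega> (1 / real n))"
        using \<open>A \<ge> 0\<close> \<open>\<delta> > 0\<close> modcont_nonneg[of "1 / real n"] unfolding B_def
        by (simp add: algebra_simps)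
      finally show "\<omega> \<delta> \<le> B * (real n powr - \<nu> + real n * \<delta> * \<omega> (1 / real n))" .
    qed
  qed
  moreover have "B \<ge> 0"
    unfolding B_def using \<open>A \<ge> 0\<close> by simp
  ultimately show ?thesis
    by blast
qed

end

section \<open>From the recursive estimate to the Lipschitz class\<close>

lemma ex_powr_contraction_factor:
  fixes \<nu> B :: real
  assumes "0 < \<nu>" "\<nu> < 1" "B \<ge> 0"
  shows "\<exists>q. 0 < q \<and> q \<le> 1/2 \<and> B * (2 / q) powr \<nu> * q \<le> 1/2"
proof -
  define c where "c = 1 / (2 * (B * 2 powr \<nu> + 1))"
  have B2: "B * 2 powr \<nu> \<ge> 0"
    using assms by simp
  then have "c > 0"
    unfolding c_def by simp
  define q where "q = min (1/2) (c powr (1 / (1 - \<nu>)))"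
  have "q > 0"
    unfolding q_def using \<open>c > 0\<close> by simp
  have "q powr (1 - \<nu>) \<le> (c powr (1 / (1 - \<nu>))) powr (1 - \<nu>)"
    using \<open>q > 0\<close> assms by (intro powr_mono2) (auto simp: q_def)
  also have "\<dots> = c"
    using assms \<open>c > 0\<close> by (simp add: powr_powr)
  finally have "q powr (1 - \<nu>) \<le> c" .
  have "B * (2 / q) powr \<nu> * q = B * 2 powr \<nu> * q powr (1 - \<nu>)"
    using \<open>q > 0\<close> by (simp add: powr_divide powr_diff)
  also have "\<dots> \<le> B * 2 powr \<nu> * c"
    using \<open>q powr (1 - \<nu>) \<le> c\<close> B2 by (intro mult_left_mono)
  also have "\<dots> \<le> 1/2"
    unfolding c_def using B2 by (simp add: divide_le_eq)
  finally show ?thesis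
    using \<open>q > 0\<close> by (intro exI[of _ q]) (auto simp: q_def)
qed

lemma nat_floor_div_bounds:
  fixes q \<delta> :: real
  assumes "0 < q" "q \<le> 1/2" "0 < \<delta>" "real N + 2 \<le> q / \<delta>"
  defines "n \<equiv> nat \<lfloor>q / \<delta>\<rfloor>"
  shows "N \<le> n" "real n * \<delta> \<le> q" "2 * \<delta> \<le> 1 / real n" "1 / real n \<le> 2 * \<delta> / q"
proof -
  have n: "real n \<le> q / \<delta>" "q / \<delta> - 1 < real n"
    unfolding n_def using assms(4) by linarith+
  then show "N \<le> n"
    using assms(4) by linarith
  have "real n > 0"
    using n assms(4) by linarith
  show "real n * \<delta> \<le> q"
    using n assms by (simp add: le_divide_eq)
  have "q / \<delta> \<le> (1/2) / \<delta>"
    using assms by (intro divide_right_mono) auto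
  then have "real n * (2 * \<delta>) \<le> 1"
    using n assms(3) by (simp add: le_divide_eq)
  then show "2 * \<delta> \<le> 1 / real n"
    using \<open>real n > 0\<close> by (simp add: le_divide_eq mult.commute)
  have "q / (2 * \<delta>) = (q / \<delta>) / 2"
    by simp
  then have "q / (2 * \<delta>) \<le> real n"
    using n assms(4) of_nat_0_le_iff[of N] by linarith
  then have "q \<le> real n * (2 * \<delta>)"
    using assms(3) by (simp add: divide_le_eq)
  then show "1 / real n \<le> 2 * \<delta> / q"
    using \<open>real n > 0\<close> assms(1) by (simp add: divide_le_eq le_divide_eq mult.commute)
qed

lemma recursive_bound_step:
  fixes W :: "real \<Rightarrow> real"
  assumes q: "0 < q" "q \<le> 1/2" "B * (2 / q) powr \<nu> * q \<le> 1/2"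
    and "0 < \<nu>" "B \<ge> 0" and K: "2 * B * (2 / q) powr \<nu> \<le> K"
    and W_nonneg: "\<And>\<delta>. \<delta> > 0 \<Longrightarrow> W \<delta> \<ge> 0"
    and recursive: "\<And>n \<delta>. n \<ge> N \<Longrightarrow> \<delta> > 0 \<Longrightarrow> real n * \<delta> \<le> 1 \<Longrightarrow>
                      W \<delta> \<le> B * (real n powr - \<nu> + real n * \<delta> * W (1 / real n))"
    and \<delta>: "0 < \<delta>" "real N + 2 \<le> q / \<delta>"
    and coarse: "\<And>u. 2 * \<delta> \<le> u \<Longrightarrow> W u \<le> K * u powr \<nu>"
  shows "W \<delta> \<le> K * \<delta> powr \<nu>"
proof -
  define R where "R = (2 / q) powr \<nu>"
  define n where "n = nat \<lfloor>q / \<delta>\<rfloor>"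
  note n = nat_floor_div_bounds[OF q(1,2) \<delta>, folded n_def]
  have "real n > 0"
    using n(3) \<delta>(1) by (cases "n = 0") auto
  have "K \<ge> 0"
    using K \<open>B \<ge> 0\<close> unfolding R_def by (smt (verit) powr_ge_zero zero_le_mult_iff)
  have "(1 / real n) powr \<nu> \<le> (2 * \<delta> / q) powr \<nu>"
    using n(4) \<open>real n > 0\<close> \<open>0 < \<nu>\<close> by (intro powr_mono2) auto
  also have "\<dots> = R * \<delta> powr \<nu>"
    unfolding R_def using q \<delta>(1) by (simp add: powr_mult[symmetric])
  finally have small: "(1 / real n) powr \<nu> \<le> R * \<delta> powr \<nu>" .
  have "W (1 / real n) \<le> K * (1 / real n) powr \<nu>"
    using coarse n(3) by blast
  also have "\<dots> \<le> K * (R * \<delta> powr \<nu>)"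
    using small \<open>K \<ge> 0\<close> by (rule mult_left_mono)
  finally have coarse_n: "W (1 / real n) \<le> K * (R * \<delta> powr \<nu>)" .
  have "W \<delta> \<le> B * (real n powr - \<nu> + real n * \<delta> * W (1 / real n))"
    using recursive[OF n(1) \<delta>(1)] n(2) q(2) by simp
  also have "\<dots> \<le> B * (R * \<delta> powr \<nu> + q * (K * (R * \<delta> powr \<nu>)))"
  proof (intro mult_left_mono add_mono \<open>B \<ge> 0\<close>)
    show "real n powr - \<nu> \<le> R * \<delta> powr \<nu>"
      using small \<open>real n > 0\<close> by (simp add: powr_minus_divide powr_divide)
    have "real n * \<delta> * W (1 / real n) \<le> q * W (1 / real n)"
      using n(2) W_nonneg[of "1 / real n"] \<open>real n > 0\<close> by (intro mult_right_mono) auto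
    also have "\<dots> \<le> q * (K * (R * \<delta> powr \<nu>))"
      using coarse_n q by (intro mult_left_mono) auto
    finally show "real n * \<delta> * W (1 / real n) \<le> q * (K * (R * \<delta> powr \<nu>))" .
  qed
  also have "\<dots> = (B * R) * \<delta> powr \<nu> + (B * R * q) * K * \<delta> powr \<nu>"
    by (simp add: algebra_simps)
  also have "\<dots> \<le> (K / 2) * \<delta> powr \<nu> + (1 / 2) * K * \<delta> powr \<nu>"
    using K q(3) \<open>K \<ge> 0\<close> unfolding R_def by (intro add_mono mult_right_mono) auto
  finally show ?thesis
    by simp
qed

lemma dyadic_downward_induct:
  fixes P :: "real \<Rightarrow> bool"
  assumes "\<delta>0 > 0" and large: "\<And>\<delta>. \<delta> \<ge> \<delta>0 \<Longrightarrow> P \<delta>"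
    and step: "\<And>\<delta>. 0 < \<delta> \<Longrightarrow> \<delta> < \<delta>0 \<Longrightarrow> (\<And>u. 2 * \<delta> \<le> u \<Longrightarrow> P u) \<Longrightarrow> P \<delta>"
    and "\<delta> > 0"
  shows "P \<delta>"
proof -
  have "\<forall>\<delta>. \<delta>0 / 2 ^ m \<le> \<delta> \<longrightarrow> P \<delta>" for m
  proof (induction m)
    case 0
    then show ?case
      using large by simp
  next
    case (Suc m)
    show ?case
    proof (intro allI impI)
      fix \<delta> assume \<delta>: "\<delta>0 / 2 ^ Suc m \<le> \<delta>"
      then have "\<delta> > 0"
        using \<open>\<delta>0 > 0\<close> by (smt (verit) divide_pos_pos zero_less_power)
      show "P \<delta>"
      proof (cases "\<delta> \<ge> \<delta>0")
        case False
        show ?thesis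
        proof (rule step)
          show "0 < \<delta>" "\<delta> < \<delta>0"
            using \<open>\<delta> > 0\<close> False by auto
          show "P u" if "2 * \<delta> \<le> u" for u
            using Suc.IH \<delta> that by simp
        qed
      qed (rule large)
    qed
  qed
  moreover obtain m where "\<delta>0 / \<delta> < 2 ^ m"
    using real_arch_pow[of 2 "\<delta>0 / \<delta>"] by auto
  then have "\<delta>0 / 2 ^ m \<le> \<delta>"
    using \<open>\<delta> > 0\<close> by (simp add: field_simps)
  ultimately show ?thesis
    by blast
qed

lemma bigo_powr_at_right_0I:
  fixes W :: "real \<Rightarrow> real"
  assumes "\<And>\<delta>. \<delta> > 0 \<Longrightarrow> 0 \<le> W \<delta>" "\<And>\<delta>. \<delta> > 0 \<Longrightarrow> W \<delta> \<le> K * \<delta> powr \<nu>"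
  shows "W \<in> O[at_right 0](\<lambda>\<delta>. \<delta> powr \<nu>)"
proof (rule landau_o.bigI)
  show "\<forall>\<^sub>F \<delta> in at_right 0. norm (W \<delta>) \<le> max K 1 * norm (\<delta> powr \<nu>)"
    using eventually_at_right_less[of "0::real"]
  proof eventually_elim
    case (elim \<delta>)
    then have "norm (W \<delta>) \<le> K * \<delta> powr \<nu>"
      using assms by simp
    also have "\<dots> \<le> max K 1 * norm (\<delta> powr \<nu>)"
      by (simp add: mult_right_mono)
    finally show ?case .
  qed
qed simp

text \<open>The recursion at scale \<open>\<delta>\<close> only involves \<open>W\<close> at scales \<open>\<ge> 2 \<delta>\<close>, so the bound \<open>K \<delta>\<^sup>\<nu>\<close>,
  trivially true for \<open>\<delta> \<ge> \<delta>\<^sub>0\<close>, propagates down one dyadic scale at a time.\<close>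
lemma bigo_powr_of_recursive_bound:
  fixes W :: "real \<Rightarrow> real" and \<nu> B Wmax :: real
  assumes nu: "0 < \<nu>" "\<nu> < 1" and "B \<ge> 0"
    and W_nonneg: "\<And>\<delta>. \<delta> > 0 \<Longrightarrow> W \<delta> \<ge> 0"
    and W_bounded: "\<And>\<delta>. \<delta> > 0 \<Longrightarrow> W \<delta> \<le> Wmax"
    and recursive: "\<forall>\<^sub>F n in sequentially. \<forall>\<delta>>0. real n * \<delta> \<le> 1 \<longrightarrow>
                      W \<delta> \<le> B * (real n powr - \<nu> + real n * \<delta> * W (1 / real n))"
  shows "W \<in> O[at_right 0](\<lambda>\<delta>. \<delta> powr \<nu>)"
proof -
  obtain N where N: "\<And>n \<delta>. n \<ge> N \<Longrightarrow> \<delta> > 0 \<Longrightarrow> real n * \<delta> \<le> 1 \<Longrightarrow>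
      W \<delta> \<le> B * (real n powr - \<nu> + real n * \<delta> * W (1 / real n))"
    using recursive unfolding eventually_sequentially by blast
  obtain q where q: "0 < q" "q \<le> 1/2" "B * (2 / q) powr \<nu> * q \<le> 1/2"
    using ex_powr_contraction_factor[OF nu \<open>B \<ge> 0\<close>] by blast
  define \<delta>0 where "\<delta>0 = q / (real N + 2)"
  define K where "K = max (Wmax / \<delta>0 powr \<nu>) (2 * B * (2 / q) powr \<nu>)"
  have "\<delta>0 > 0"
    unfolding \<delta>0_def using q by simp
  have "W \<delta> \<le> K * \<delta> powr \<nu>" if "\<delta> > 0" for \<delta>
  proof (rule dyadic_downward_induct[where P = "\<lambda>\<delta>. W \<delta> \<le> K * \<delta> powr \<nu>", OF \<open>\<delta>0 > 0\<close> _ _ that])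
    fix \<delta> assume "\<delta> \<ge> \<delta>0"
    have "Wmax \<ge> 0"
      using W_nonneg[OF \<open>\<delta>0 > 0\<close>] W_bounded[OF \<open>\<delta>0 > 0\<close>] by linarith
    have "W \<delta> \<le> (Wmax / \<delta>0 powr \<nu>) * \<delta>0 powr \<nu>"
      using W_bounded[of \<delta>] \<open>\<delta> \<ge> \<delta>0\<close> \<open>\<delta>0 > 0\<close> by simp
    also have "\<dots> \<le> K * \<delta> powr \<nu>"
      unfolding K_def using \<open>Wmax \<ge> 0\<close> \<open>\<delta>0 > 0\<close> \<open>\<delta> \<ge> \<delta>0\<close> nu
      by (intro mult_mono powr_mono2) (auto simp: le_max_iff_disj)
    finally show "W \<delta> \<le> K * \<delta> powr \<nu>" .
  next
    fix \<delta> assume "0 < \<delta>" "\<delta> < \<delta>0" and coarse: "\<And>u. 2 * \<delta> \<le> u \<Longrightarrow> W u \<le> K * u powr \<nu>"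
    have "real N + 2 = q / \<delta>0"
      unfolding \<delta>0_def using q by simp
    also have "\<dots> \<le> q / \<delta>"
      using \<open>0 < \<delta>\<close> \<open>\<delta> < \<delta>0\<close> q by (intro divide_left_mono) auto
    finally have wide: "real N + 2 \<le> q / \<delta>" .
    have "2 * B * (2 / q) powr \<nu> \<le> K"
      unfolding K_def by simp
    from recursive_bound_step[OF q nu(1) \<open>B \<ge> 0\<close> this W_nonneg N \<open>0 < \<delta>\<close> wide coarse]
    show "W \<delta> \<le> K * \<delta> powr \<nu>" .
  qed
  then show ?thesis
    using W_nonneg by (intro bigo_powr_at_right_0I)
qed

theorem theorem3p2:
  fixes \<sigma> :: "real \<Rightarrow> real" and \<alpha> \<nu> :: real
    and a b :: "real ^ 'n" and f :: "real ^ 'n \<Rightarrow> real"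
  assumes sig_mono: "mono \<sigma>"
    and sig_bot: "(\<sigma> \<longlongrightarrow> 0) at_bot"
    and sig_top: "(\<sigma> \<longlongrightarrow> 1) at_top"
    and sig_odd: "\<And>x. \<sigma> (- x) - 1/2 = - (\<sigma> x - 1/2)"
    and sig_C2_1: "\<And>x. \<sigma> differentiable (at x)"
    and sig_C2_2: "\<And>x. deriv \<sigma> differentiable (at x)"
    and sig_C2_3: "continuous_on UNIV (deriv (deriv \<sigma>))"
    and sig_concave: "concave_on {0..} \<sigma>"
    and alpha: "\<alpha> > 1"
    and sig_decay: "\<sigma> \<in> O[at_bot](\<lambda>x. \<bar>x\<bar> powr (-1 - \<alpha>))"
    and sig1: "\<sigma> 1 < 1"
    and M1: "M_beta 1 (deriv (phi_sigma \<sigma>)) < top"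
    and ab: "\<And>i. a $ i < b $ i"
    and fcont: "continuous_on (cbox a b) f"
    and nu: "0 < \<nu>" "\<nu> < 1"
    and rate: "\<exists>C. \<forall>\<^sub>F n in sequentially. \<forall>x\<in>cbox a b.
                 \<bar>KNN \<sigma> a b n f x - f x\<bar> \<le> C * real n powr (- \<nu>)"
  shows "f \<in> LipClass (cbox a b) \<nu>"
proof -
  have "cbox a b \<noteq> {}"
    using ab by (simp add: interval_eq_empty_cart not_less less_imp_le)
  then interpret kantorovich \<sigma> \<alpha> a b f
    by unfold_locales (use assms in \<open>auto simp: convex_box\<close>)
  obtain C where "\<forall>\<^sub>F n in sequentially. \<forall>x\<in>cbox a b. \<bar>KNN \<sigma> a b n f x - f x\<bar> \<le> C * real n powr - \<nu>"
    using rate by blast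
  then obtain B where "B \<ge> 0" and recursive:
    "\<forall>\<^sub>F n in sequentially. \<forall>\<delta>>0. real n * \<delta> \<le> 1 \<longrightarrow>
       modcont (cbox a b) f \<delta> \<le> B * (real n powr - \<nu> + real n * \<delta> * modcont (cbox a b) f (1 / real n))"
    using modcont_recursive_bound by blast
  obtain Wmax where "\<And>\<delta>. \<delta> \<ge> 0 \<Longrightarrow> modcont (cbox a b) f \<delta> \<le> Wmax"
    using modcont_bounded by blast
  then have "modcont (cbox a b) f \<in> O[at_right 0](\<lambda>\<delta>. \<delta> powr \<nu>)"
    using modcont_nonneg by (intro bigo_powr_of_recursive_bound[where Wmax = Wmax, OF nu \<open>B \<ge> 0\<close> _ _ recursive]) auto
  then show ?thesis
    unfolding LipClass_def using fcont by simp
qed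

end
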